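(* Let $z\in\mathrm{Hilb}$ be a Borel-fixed point with degree-$m$ filter $\mathcal F$ and order ideal $\mathcal R$. A nonzero tangent vector $(c_{AB})_{A\in\mathcal F,B\in\mathcal R}\in T_z\mathrm{Hilb}$, i.e. the first-order deformation $(\mathbf x^A+\varepsilon\sum_{B\in\mathcal R}c_{AB}\mathbf x^B\mid A\in\mathcal F)$, is an eigenvector for the Borel subgroup of invertible upper-triangular matrices if and only if: (1) there exists $K\in\mathbb Z^{n+1}$ with entries summing to $0$ such that $c_{AB}\neq0\implies B-A=K$; and (2) with $\mathcal F'=\mathcal F\setminus\{A\in\mathcal F:\exists B\in\mathcal R,\ c_{AB}\neq0\}$ and $\mathcal F''=\mathcal F\cup\{B\in\mathcal R:\exists A\in\mathcal F,\ c_{AB}\neq0\}$: (i) $\mathcal F'$ and $\mathcal F''$ are filters of $\mathcal P(m,n)$; (ii) for each $A=(a_0,\dots,a_n)\in\mathcal F\setminus\mathcal F'$ with $B=A+K=(b_0,\dots,b_n)$ and each $i\in\{1,\dots,n\}$, if $A+\Delta_i\in\mathcal F\setminus\mathcal F'$ then $c_{A+\Delta_i,B+\Delta_i}=\frac{b_i}{a_i}c_{AB}$.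
   Context: $K$ algebraically closed of characteristic $0$, $S=K[x_0,\dots,x_n]$; $g=(a_{ij})\in\mathrm{GL}(n+1,K)$ acts by $x_i\mapsto\sum_j a_{ji}x_j$. $\mathrm{Hilb}\subseteq\mathrm{Grass}(r,S_m)$ is the Hilbert scheme of subschemes of $\mathbb P^n$ with a fixed Hilbert polynomial, embedded via $Z\mapsto I_m$ where $I$ is the saturated ideal of $Z$ and $m$ is the Gotzmann number (so $m$ is at least the regularity of every such ideal). $z$ is Borel-fixed if its ideal is fixed by all invertible upper-triangular matrices. $\mathcal F$ (resp. $\mathcal R$) is the set of exponent vectors of degree-$m$ monomials in (resp. not in) $I_m$. $T_z\mathrm{Grass}=\mathrm{Hom}_K(I_m,S_m/I_m)$, with $(c_{AB})$ meaning $\mathbf x^A\mapsto\sum_{B}c_{AB}\mathbf x^B$, equivalently the ideal of $S[\varepsilon]$ ($\varepsilon^2=0$) generated by $\mathbf x^A+\varepsilon\sum_Bc_{AB}\mathbf x^B$, $A\in\mathcal F$; it lies in $T_z\mathrm{Hilb}$ iff that ideal is flat over $K[\varepsilon]$. The Borel subgroup fixes $z$ and acts on $T_z\mathrm{Hilb}$ by acting on this ideal (on the $x_i$, fixing $\varepsilon$) and rewriting the degree-$m$ part with generators $\mathbf x^A+\varepsilon\sum_Bc'_{AB}\mathbf x^B$. An eigenvector is a nonzero $v$ with $g\cdot v\in Kv$ for all $g$ in the group. $E_i$ denotes the $i$-th standard basis vector of $\mathbb Z^{n+1}$ (indices $0,\dots,n$), $\Delta_i=E_{i-1}-E_i$.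 $\mathcal P(m,n)$ is the poset of degree-$m$ exponent vectors with order generated by $A\prec A+\Delta_i$; a filter is an up-closed subset. *)

theory Defs
  imports "HOL-Library.Poly_Mapping" "HOL-Computational_Algebra.Polynomial"
begin

(* Exponent vectors are finitely supported maps nat =>0 nat; a monomial x^A in
   the variables x_0..x_n has Poly_Mapping.keys A \<subseteq> {0..n}. *)

type_synonym expo = "nat \<Rightarrow>\<^sub>0 nat"
type_synonym 'k mpoly = "expo \<Rightarrow>\<^sub>0 'k"

definition tdeg :: "expo \<Rightarrow> nat" where
  "tdeg A = (\<Sum>i\<in>Poly_Mapping.keys A. Poly_Mapping.lookup A i)"

definition is_expo :: "nat \<Rightarrow> expo \<Rightarrow> bool" where
  "is_expo n A \<longleftrightarrow> Poly_Mapping.keys A \<subseteq> {0..n}"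

(* degree-d exponent vectors in n+1 variables: the elements of P(d,n) *)
definition Pmn :: "nat \<Rightarrow> nat \<Rightarrow> expo set" where
  "Pmn m n = {A. is_expo n A \<and> tdeg A = m}"

definition mon :: "expo \<Rightarrow> 'k::comm_ring_1 mpoly" where
  "mon A = Poly_Mapping.single A 1"

definition const :: "'k::comm_ring_1 \<Rightarrow> 'k mpoly" where
  "const c = Poly_Mapping.single 0 c"

definition var :: "nat \<Rightarrow> 'k::comm_ring_1 mpoly" where
  "var i = mon (Poly_Mapping.single i 1)"

definition Spoly :: "nat \<Rightarrow> 'k::comm_ring_1 mpoly set" where
  "Spoly n = {p. \<forall>A\<in>Poly_Mapping.keys p. is_expo n A}"

definition homog :: "nat \<Rightarrow> 'k::comm_ring_1 mpoly \<Rightarrow> bool" where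
  "homog d p \<longleftrightarrow> (\<forall>A\<in>Poly_Mapping.keys p. tdeg A = d)"

definition homog_part :: "nat \<Rightarrow> 'k::comm_ring_1 mpoly \<Rightarrow> 'k mpoly" where
  "homog_part d p = (\<Sum>A\<in>{A\<in>Poly_Mapping.keys p. tdeg A = d}. const (Poly_Mapping.lookup p A) * mon A)"

definition deg_part :: "nat \<Rightarrow> nat \<Rightarrow> 'k::comm_ring_1 mpoly set \<Rightarrow> 'k mpoly set" where
  "deg_part n d I = {p\<in>I. p \<in> Spoly n \<and> homog d p}"

definition kdim :: "'k::field mpoly set \<Rightarrow> nat" where
  "kdim V = vector_space.dim (\<lambda>c p. const c * p) V"

definition is_ideal :: "nat \<Rightarrow> 'k::comm_ring_1 mpoly set \<Rightarrow> bool" where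
  "is_ideal n I \<longleftrightarrow> I \<subseteq> Spoly n \<and> 0 \<in> I \<and> (\<forall>f\<in>I. \<forall>g\<in>I. f + g \<in> I)
     \<and> (\<forall>f\<in>I. \<forall>h\<in>Spoly n. h * f \<in> I)"

definition homog_ideal :: "nat \<Rightarrow> 'k::comm_ring_1 mpoly set \<Rightarrow> bool" where
  "homog_ideal n I \<longleftrightarrow> is_ideal n I \<and> (\<forall>f\<in>I. \<forall>d. homog_part d f \<in> I)"

(* I = (I : m^\<infinity>), m = (x_0,...,x_n); m^N is spanned by the monomials of degree N *)
definition saturated :: "nat \<Rightarrow> 'k::comm_ring_1 mpoly set \<Rightarrow> bool" where
  "saturated n I \<longleftrightarrow> (\<forall>f\<in>Spoly n. (\<exists>N. \<forall>M\<in>Pmn N n. mon M * f \<in> I) \<longrightarrow> f \<in> I)"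

definition hilb_fun :: "nat \<Rightarrow> 'k::field mpoly set \<Rightarrow> nat \<Rightarrow> nat" where
  "hilb_fun n I d = kdim (deg_part n d (Spoly n :: 'k mpoly set)) - kdim (deg_part n d I)"

(* m is the Gotzmann number of the Hilbert polynomial of S/I:
   P(t) = \<Sum>_{i=1}^{m} binom(t + a_i - (i-1), a_i), a_1 \<ge> ... \<ge> a_m \<ge> 0 *)
definition gotzmann_number :: "nat \<Rightarrow> 'k::field mpoly set \<Rightarrow> nat \<Rightarrow> bool" where
  "gotzmann_number n I m \<longleftrightarrow>
     (\<exists>a::nat list. length a = m \<and> sorted_wrt (\<ge>) a \<and>
        (\<exists>N. \<forall>d\<ge>N. hilb_fun n I d = (\<Sum>i<m. (d + a!i - i) choose (a!i))))"

(* matrices g = (a_ij), 0 \<le> i,j \<le> n *)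
definition upper_triangular :: "nat \<Rightarrow> (nat \<Rightarrow> nat \<Rightarrow> 'k::comm_ring_1) \<Rightarrow> bool" where
  "upper_triangular n g \<longleftrightarrow> (\<forall>i\<le>n. \<forall>j\<le>n. j < i \<longrightarrow> g i j = 0)"

definition invertible_mat :: "nat \<Rightarrow> (nat \<Rightarrow> nat \<Rightarrow> 'k::comm_ring_1) \<Rightarrow> bool" where
  "invertible_mat n g \<longleftrightarrow> (\<exists>h. \<forall>i\<le>n. \<forall>j\<le>n.
      (\<Sum>k\<le>n. g i k * h k j) = (if i = j then 1 else 0) \<and>
      (\<Sum>k\<le>n. h i k * g k j) = (if i = j then 1 else 0))"

definition borel :: "nat \<Rightarrow> (nat \<Rightarrow> nat \<Rightarrow> 'k::comm_ring_1) set" where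
  "borel n = {g. upper_triangular n g \<and> invertible_mat n g}"

(* action of g on S: x_i \<mapsto> \<Sum>_j a_ji x_j, extended to a ring homomorphism *)
definition lin_form :: "nat \<Rightarrow> (nat \<Rightarrow> nat \<Rightarrow> 'k::comm_ring_1) \<Rightarrow> nat \<Rightarrow> 'k mpoly" where
  "lin_form n g i = (\<Sum>j\<le>n. const (g j i) * var j)"

definition act :: "nat \<Rightarrow> (nat \<Rightarrow> nat \<Rightarrow> 'k::comm_ring_1) \<Rightarrow> 'k mpoly \<Rightarrow> 'k mpoly" where
  "act n g p = (\<Sum>A\<in>Poly_Mapping.keys p. const (Poly_Mapping.lookup p A) * (\<Prod>i\<in>Poly_Mapping.keys A. lin_form n g i ^ Poly_Mapping.lookup A i))"

definition borel_fixed :: "nat \<Rightarrow> 'k::comm_ring_1 mpoly set \<Rightarrow> bool" where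
  "borel_fixed n I \<longleftrightarrow> (\<forall>g\<in>borel n. act n g ` I = I)"

definition Fset :: "nat \<Rightarrow> nat \<Rightarrow> 'k::comm_ring_1 mpoly set \<Rightarrow> expo set" where
  "Fset n m I = {A\<in>Pmn m n. (mon A :: 'k mpoly) \<in> I}"

definition Rset :: "nat \<Rightarrow> nat \<Rightarrow> 'k::comm_ring_1 mpoly set \<Rightarrow> expo set" where
  "Rset n m I = {A\<in>Pmn m n. (mon A :: 'k mpoly) \<notin> I}"

(* Elements of S[\<epsilon>] = S \<oplus> \<epsilon> S are pairs (f0, f1) standing for f0 + \<epsilon> f1.
   Membership in the ideal of S[\<epsilon>] generated by gen X (X finite index set):
   (f0,f1) = \<Sum> (a_x + \<epsilon> b_x) (g0_x + \<epsilon> g1_x) with a_x, b_x \<in> S. *)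
definition eps_ideal :: "nat \<Rightarrow> 'i set \<Rightarrow> ('i \<Rightarrow> 'k::comm_ring_1 mpoly \<times> 'k mpoly)
     \<Rightarrow> ('k mpoly \<times> 'k mpoly) set" where
  "eps_ideal n X gen = {(f0, f1). f0 \<in> Spoly n \<and> f1 \<in> Spoly n \<and>
     (\<exists>a b. (\<forall>x\<in>X. a x \<in> Spoly n \<and> b x \<in> Spoly n) \<and>
        f0 = (\<Sum>x\<in>X. a x * fst (gen x)) \<and>
        f1 = (\<Sum>x\<in>X. a x * snd (gen x) + b x * fst (gen x)))}"

(* the first-order deformation ideal (x^A + \<epsilon> \<Sum>_B c_AB x^B | A \<in> F) *)
definition def_gen :: "nat \<Rightarrow> nat \<Rightarrow> 'k::comm_ring_1 mpoly set \<Rightarrow> (expo \<Rightarrow> expo \<Rightarrow> 'k)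
     \<Rightarrow> expo \<Rightarrow> 'k mpoly \<times> 'k mpoly" where
  "def_gen n m I c A = (mon A, \<Sum>B\<in>Rset n m I. const (c A B) * mon B)"

definition def_ideal :: "nat \<Rightarrow> nat \<Rightarrow> 'k::comm_ring_1 mpoly set \<Rightarrow> (expo \<Rightarrow> expo \<Rightarrow> 'k)
     \<Rightarrow> ('k mpoly \<times> 'k mpoly) set" where
  "def_ideal n m I c = eps_ideal n (Fset n m I) (def_gen n m I c)"

(* tangent vectors to Grass at z: c_AB indexed by A \<in> F, B \<in> R *)
definition grass_tangent :: "nat \<Rightarrow> nat \<Rightarrow> 'k::comm_ring_1 mpoly set \<Rightarrow> (expo \<Rightarrow> expo \<Rightarrow> 'k) \<Rightarrow> bool" where
  "grass_tangent n m I c \<longleftrightarrow> (\<forall>A B. c A B \<noteq> 0 \<longrightarrow> A \<in> Fset n m I \<and> B \<in> Rset n m I)"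

(* flatness of S[\<epsilon>]/J over K[\<epsilon>]: (local) flatness criterion, i.e.
   the kernel of multiplication by \<epsilon> equals \<epsilon>(S[\<epsilon>]/J):
   \<epsilon> f \<in> J  \<Longrightarrow>  f \<in> J + \<epsilon> S[\<epsilon>] *)
definition eps_flat :: "nat \<Rightarrow> ('k::comm_ring_1 mpoly \<times> 'k mpoly) set \<Rightarrow> bool" where
  "eps_flat n J \<longleftrightarrow> (\<forall>f\<in>Spoly n. (0, f) \<in> J \<longrightarrow> (\<exists>h\<in>Spoly n. (f, h) \<in> J))"

definition hilb_tangent :: "nat \<Rightarrow> nat \<Rightarrow> 'k::comm_ring_1 mpoly set \<Rightarrow> (expo \<Rightarrow> expo \<Rightarrow> 'k) \<Rightarrow> bool" where
  "hilb_tangent n m I c \<longleftrightarrow> grass_tangent n m I c \<and> eps_flat n (def_ideal n m I c)"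

definition act_eps :: "nat \<Rightarrow> (nat \<Rightarrow> nat \<Rightarrow> 'k::comm_ring_1) \<Rightarrow> ('k mpoly \<times> 'k mpoly) set
     \<Rightarrow> ('k mpoly \<times> 'k mpoly) set" where
  "act_eps n g J = (\<lambda>(f0, f1). (act n g f0, act n g f1)) ` J"

(* g \<cdot> c = c' : the degree-m part of g \<cdot> J is generated by x^A + \<epsilon> \<Sum>_B c'_AB x^B *)
definition borel_act_is :: "nat \<Rightarrow> nat \<Rightarrow> 'k::comm_ring_1 mpoly set \<Rightarrow> (nat \<Rightarrow> nat \<Rightarrow> 'k)
     \<Rightarrow> (expo \<Rightarrow> expo \<Rightarrow> 'k) \<Rightarrow> (expo \<Rightarrow> expo \<Rightarrow> 'k) \<Rightarrow> bool" where
  "borel_act_is n m I g c c' \<longleftrightarrow> grass_tangent n m I c' \<and>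
     (\<forall>A\<in>Fset n m I. def_gen n m I c' A \<in> act_eps n g (def_ideal n m I c))"

definition borel_eigenvector :: "nat \<Rightarrow> nat \<Rightarrow> 'k::comm_ring_1 mpoly set \<Rightarrow> (expo \<Rightarrow> expo \<Rightarrow> 'k) \<Rightarrow> bool" where
  "borel_eigenvector n m I c \<longleftrightarrow> (\<exists>A B. c A B \<noteq> 0) \<and>
     (\<forall>g\<in>borel n. \<exists>t. borel_act_is n m I g c (\<lambda>A B. t * c A B))"

(* A + \<Delta>_i = A + E_{i-1} - E_i  (meaningful when a_i \<ge> 1) *)
definition addDelta :: "expo \<Rightarrow> nat \<Rightarrow> expo" where
  "addDelta A i = A + Poly_Mapping.single (i - 1) 1 - Poly_Mapping.single i 1"

definition P_step :: "nat \<Rightarrow> nat \<Rightarrow> expo \<Rightarrow> expo \<Rightarrow> bool" where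
  "P_step m n A A' \<longleftrightarrow> A \<in> Pmn m n \<and> (\<exists>i\<in>{1..n}. 1 \<le> Poly_Mapping.lookup A i \<and> A' = addDelta A i)"

definition P_le :: "nat \<Rightarrow> nat \<Rightarrow> expo \<Rightarrow> expo \<Rightarrow> bool" where
  "P_le m n = (P_step m n)\<^sup>*\<^sup>*"

definition is_filter :: "nat \<Rightarrow> nat \<Rightarrow> expo set \<Rightarrow> bool" where
  "is_filter m n X \<longleftrightarrow> X \<subseteq> Pmn m n \<and> (\<forall>A\<in>X. \<forall>A'. P_le m n A A' \<longrightarrow> A' \<in> X)"

end

theory Submission
  imports Defs
begin

(* A pair (f0, f1) of degree m lies in the deformation ideal J iff f0 is in the span of F and the
   R-part of f1 equals phi(f0), where phi(x^A) = sum_B c_AB x^B; flatness is what rules out any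
   further elements.  So an upper triangular g acts on c as a scalar t iff g maps the span of F into
   itself (automatic, I being Borel-fixed) and the R-part of g(phi(x^A)) is t phi(g x^A) for A in F.
   The Borel group is generated by the diagonal matrices and the substitutions x_i |-> x_i + s x_(i-1);
   the other elementary substitutions are commutators of these.  For diagonal matrices the condition
   says that all nonzero c_AB have the same weight K = B - A.  For x_i |-> x_i + s x_(i-1), comparing
   coefficients of s^k gives identities along Delta_i-chains which, given a constant weight, follow
   by induction on k from the filter property of F' and F'' and the ratio rule.  Conversely, the
   diagonal matrices with a single entry 2 force a constant weight, and the substitution with s = -1
   forces the filter properties and the ratio rule. *)

section \<open>Polynomials\<close>

lemma sum_eq_single_term:
  fixes f :: "'a \<Rightarrow> 'b::comm_monoid_add"
  assumes "finite S" "x \<in> S" "\<And>k. k \<in> S \<Longrightarrow> k \<noteq> x \<Longrightarrow> f k = 0"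
  shows "sum f S = f x"
  using assms sum.remove[OF assms(1,2), of f] by (simp add: sum.neutral)

lemma sum_atMost_extend:
  fixes g :: "nat \<Rightarrow> 'a::comm_monoid_add"
  assumes "b \<le> M"
  shows "(\<Sum>k\<le>b. g k) = (\<Sum>k\<le>M. if k \<le> b then g k else 0)"
proof -
  have "(\<Sum>k\<le>M. if k \<le> b then g k else 0) = sum g {k\<in>{..M}. k \<le> b}"
    by (rule sum.inter_filter[symmetric]) simp
  also have "{k\<in>{..M}. k \<le> b} = {..b}" using assms by auto
  finally show ?thesis by simp
qed

lemma lookup_const_mult: "Poly_Mapping.lookup (const c * p) A = c * Poly_Mapping.lookup p A"
  unfolding const_def mult_map_scale_conv_mult[symmetric]
  by (simp add: map.rep_eq when_def)

lemma keys_const_mult_subset: "Poly_Mapping.keys (const c * p) \<subseteq> Poly_Mapping.keys p"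
  by (auto simp: in_keys_iff lookup_const_mult)

lemma const_mult: "const a * const b = (const (a * b) :: 'k::comm_ring_1 mpoly)"
  by (simp add: const_def mult_single)

lemma const_add: "const (a + b) = (const a + const b :: 'k::comm_ring_1 mpoly)"
  by (simp add: const_def single_add)

lemma const_diff: "const (a - b) = (const a - const b :: 'k::comm_ring_1 mpoly)"
  by (simp add: const_def single_diff)

lemma const_0 [simp]: "const 0 = (0 :: 'k::comm_ring_1 mpoly)"
  by (simp add: const_def)

lemma const_1 [simp]: "const 1 = (1 :: 'k::comm_ring_1 mpoly)"
  by (simp add: const_def)

lemma const_sum: "finite S \<Longrightarrow> const (\<Sum>x\<in>S. f x) = (\<Sum>x\<in>S. const (f x) :: 'k::comm_ring_1 mpoly)"
  by (induction S rule: finite_induct) (auto simp: const_add)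

lemma const_prod: "finite S \<Longrightarrow> const (\<Prod>x\<in>S. f x) = (\<Prod>x\<in>S. const (f x) :: 'k::comm_ring_1 mpoly)"
  by (induction S rule: finite_induct) (auto simp: const_mult[symmetric])

lemma const_power: "const (a ^ k) = (const a ^ k :: 'k::comm_ring_1 mpoly)"
  by (induction k) (auto simp: const_mult[symmetric])

lemma of_nat_mpoly: "(of_nat x :: 'k::comm_ring_1 mpoly) = const (of_nat x)"
  by (simp add: const_def)

lemma mon_mult: "mon A * mon B = (mon (A + B) :: 'k::comm_ring_1 mpoly)"
  by (simp add: mon_def mult_single)

lemma mon_0 [simp]: "mon 0 = (1 :: 'k::comm_ring_1 mpoly)"
  by (simp add: mon_def)

lemma prod_mon: "(\<Prod>x\<in>S. mon (f x)) = (mon (\<Sum>x\<in>S. f x) :: 'k::comm_ring_1 mpoly)"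
  by (induction S rule: infinite_finite_induct) (auto simp: mon_mult)

lemma var_power: "var i ^ k = (mon (Poly_Mapping.single i k) :: 'k::comm_ring_1 mpoly)"
  by (induction k) (auto simp: var_def mon_mult single_add[symmetric] ac_simps)

lemma const_mult_mon: "const a * mon A = (Poly_Mapping.single A a :: 'k::comm_ring_1 mpoly)"
  by (simp add: mon_def const_def mult_single)

lemma lookup_mon: "Poly_Mapping.lookup (mon A :: 'k::comm_ring_1 mpoly) B = (if A = B then 1 else 0)"
  by (simp add: mon_def lookup_single when_def)

lemma keys_mon [simp]: "Poly_Mapping.keys (mon A :: 'k::comm_ring_1 mpoly) = {A}"
  by (simp add: mon_def)

lemma poly_mapping_eq_sum_single:
  fixes p :: "'a \<Rightarrow>\<^sub>0 'b::comm_monoid_add"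
  assumes "finite S" "Poly_Mapping.keys p \<subseteq> S"
  shows "p = (\<Sum>x\<in>S. Poly_Mapping.single x (Poly_Mapping.lookup p x))"
proof (rule poly_mapping_eqI)
  fix k
  have "(\<Sum>x\<in>S. Poly_Mapping.lookup (Poly_Mapping.single x (Poly_Mapping.lookup p x)) k)
      = (\<Sum>x\<in>S. if x = k then Poly_Mapping.lookup p k else 0)"
    by (rule sum.cong) (auto simp: lookup_single when_def)
  also have "\<dots> = Poly_Mapping.lookup p k"
    using assms by (auto simp: in_keys_iff)
  finally show "Poly_Mapping.lookup p k
      = Poly_Mapping.lookup (\<Sum>x\<in>S. Poly_Mapping.single x (Poly_Mapping.lookup p x)) k"
    by (simp add: lookup_sum)
qed

lemma mpoly_eq_sum_mon:
  fixes p :: "'k::comm_ring_1 mpoly"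
  assumes "finite S" "Poly_Mapping.keys p \<subseteq> S"
  shows "p = (\<Sum>x\<in>S. const (Poly_Mapping.lookup p x) * mon x)"
  using poly_mapping_eq_sum_single[OF assms] by (simp add: const_mult_mon)

lemma lookup_sum_const_mult_mon:
  "finite S \<Longrightarrow> Poly_Mapping.lookup (\<Sum>x\<in>S. const (f x) * mon x :: 'k::comm_ring_1 mpoly) B
     = (if B \<in> S then f B else 0)"
  by (simp add: lookup_sum lookup_const_mult lookup_mon if_distrib cong: if_cong)

lemma keys_sum_const_mult_mon:
  "finite S \<Longrightarrow> Poly_Mapping.keys (\<Sum>x\<in>S. const (f x) * mon x :: 'k::comm_ring_1 mpoly) \<subseteq> S"
  by (auto simp: in_keys_iff lookup_sum_const_mult_mon split: if_splits)

lemma expo_eq_iff: "(A::expo) = B \<longleftrightarrow> (\<forall>i. Poly_Mapping.lookup A i = Poly_Mapping.lookup B i)"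
  by (metis poly_mapping_eqI)

lemma tdeg_eq_sum_superset:
  assumes "finite S" "Poly_Mapping.keys A \<subseteq> S"
  shows "tdeg A = (\<Sum>i\<in>S. Poly_Mapping.lookup A i)"
  unfolding tdeg_def using assms
  by (intro sum.mono_neutral_left) (auto simp: in_keys_iff)

lemma tdeg_eq_sum_atMost: "is_expo n A \<Longrightarrow> tdeg A = (\<Sum>i\<le>n. Poly_Mapping.lookup A i)"
  by (rule tdeg_eq_sum_superset) (auto simp: is_expo_def)

lemma tdeg_add: "tdeg (A + B) = tdeg A + tdeg B"
proof -
  let ?S = "Poly_Mapping.keys A \<union> Poly_Mapping.keys B"
  have "tdeg (A + B) = (\<Sum>i\<in>?S. Poly_Mapping.lookup (A + B) i)"
    using keys_add[of A B] by (intro tdeg_eq_sum_superset) auto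
  also have "\<dots> = (\<Sum>i\<in>?S. Poly_Mapping.lookup A i) + (\<Sum>i\<in>?S. Poly_Mapping.lookup B i)"
    by (simp add: lookup_add sum.distrib)
  also have "\<dots> = tdeg A + tdeg B"
    by (subst (1 2) tdeg_eq_sum_superset[of ?S]) auto
  finally show ?thesis .
qed

lemma tdeg_0 [simp]: "tdeg 0 = 0"
  by (simp add: tdeg_def)

lemma tdeg_single [simp]: "tdeg (Poly_Mapping.single i k) = k"
  by (simp add: tdeg_def)

lemma tdeg_eq_0_iff: "tdeg A = 0 \<longleftrightarrow> A = 0"
  by (auto simp: tdeg_def in_keys_iff expo_eq_iff)

lemma lookup_le_tdeg: "Poly_Mapping.lookup A i \<le> tdeg A"
proof (cases "i \<in> Poly_Mapping.keys A")
  case True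
  then show ?thesis unfolding tdeg_def by (intro member_le_sum) auto
qed (simp add: in_keys_iff)

lemma is_expo_iff: "is_expo n A \<longleftrightarrow> (\<forall>i>n. Poly_Mapping.lookup A i = 0)"
  unfolding is_expo_def in_keys_iff subset_iff atLeastAtMost_iff
  by (metis not_le zero_le)

lemma is_expo_0 [simp]: "is_expo n 0"
  by (simp add: is_expo_def)

lemma is_expo_add: "is_expo n A \<Longrightarrow> is_expo n B \<Longrightarrow> is_expo n (A + B)"
  using keys_add[of A B] by (auto simp: is_expo_def)

lemma is_expo_single: "i \<le> n \<Longrightarrow> is_expo n (Poly_Mapping.single i k)"
  by (simp add: is_expo_def)

lemma finite_Pmn: "finite (Pmn m n)"
proof -
  let ?f = "\<lambda>A::expo. map (Poly_Mapping.lookup A) [0..<Suc n]"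
  have "inj_on ?f (Pmn m n)"
  proof (rule inj_onI)
    fix A B assume "A \<in> Pmn m n" "B \<in> Pmn m n" "?f A = ?f B"
    then show "A = B"
      by (auto simp: expo_eq_iff Pmn_def is_expo_iff map_eq_conv simp del: upt_Suc)
  qed
  moreover have "?f ` Pmn m n \<subseteq> {xs. set xs \<subseteq> {0..m} \<and> length xs = Suc n}"
    using lookup_le_tdeg by (fastforce simp: Pmn_def)
  then have "finite (?f ` Pmn m n)"
    by (rule finite_subset) (simp add: finite_lists_length_eq)
  ultimately show ?thesis using finite_imageD by blast
qed

lemma Spoly_0 [simp]: "0 \<in> Spoly n"
  by (simp add: Spoly_def)

lemma Spoly_1 [simp]: "1 \<in> Spoly n"
  by (simp add: Spoly_def)

lemma Spoly_add: "p \<in> Spoly n \<Longrightarrow> q \<in> Spoly n \<Longrightarrow> p + q \<in> Spoly n"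
  using keys_add[of p q] by (auto simp: Spoly_def)

lemma Spoly_diff: "p \<in> Spoly n \<Longrightarrow> q \<in> Spoly n \<Longrightarrow> p - q \<in> Spoly n"
  using keys_diff[of p q] by (auto simp: Spoly_def)

lemma Spoly_mult: "p \<in> Spoly n \<Longrightarrow> q \<in> Spoly n \<Longrightarrow> p * q \<in> Spoly n"
  using keys_mult[of p q] by (auto simp: Spoly_def intro!: is_expo_add)

lemma Spoly_sum: "(\<And>x. x \<in> S \<Longrightarrow> f x \<in> Spoly n) \<Longrightarrow> sum f S \<in> Spoly n"
  by (induction S rule: infinite_finite_induct) (auto intro: Spoly_add)

lemma Spoly_prod: "(\<And>x. x \<in> S \<Longrightarrow> f x \<in> Spoly n) \<Longrightarrow> prod f S \<in> Spoly n"
  by (induction S rule: infinite_finite_induct) (auto intro: Spoly_mult)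

lemma Spoly_power: "p \<in> Spoly n \<Longrightarrow> p ^ k \<in> Spoly n"
  by (induction k) (auto intro: Spoly_mult)

lemma Spoly_const [simp]: "const c \<in> Spoly n"
  by (simp add: Spoly_def const_def)

lemma Spoly_mon: "is_expo n A \<Longrightarrow> mon A \<in> Spoly n"
  by (simp add: Spoly_def)

lemma Spoly_if_keys_Pmn: "Poly_Mapping.keys p \<subseteq> Pmn d n \<Longrightarrow> p \<in> Spoly n"
  by (auto simp: Spoly_def Pmn_def)

lemma homog_0 [simp]: "homog d 0"
  by (simp add: homog_def)

lemma homog_1: "homog 0 1"
  by (simp add: homog_def)

lemma homog_add: "homog d p \<Longrightarrow> homog d q \<Longrightarrow> homog d (p + q)"
  using keys_add[of p q] by (auto simp: homog_def)

lemma homog_mult: "homog d p \<Longrightarrow> homog e q \<Longrightarrow> homog (d + e) (p * q)"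
  using keys_mult[of p q] by (auto simp: homog_def tdeg_add)

lemma homog_sum: "(\<And>x. x \<in> S \<Longrightarrow> homog d (f x)) \<Longrightarrow> homog d (sum f S)"
  by (induction S rule: infinite_finite_induct) (auto intro: homog_add)

lemma homog_prod: "(\<And>x. x \<in> S \<Longrightarrow> homog (d x) (f x)) \<Longrightarrow> homog (\<Sum>x\<in>S. d x) (prod f S)"
  by (induction S rule: infinite_finite_induct) (auto simp: homog_1 intro: homog_mult)

lemma homog_power: "homog d p \<Longrightarrow> homog (k * d) (p ^ k)"
  by (induction k) (auto simp: homog_1 dest: homog_mult)

lemma homog_const_mult: "homog d p \<Longrightarrow> homog d (const c * p)"
  using keys_const_mult_subset by (fastforce simp: homog_def)

lemma homog_mon: "homog (tdeg A) (mon A)"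
  by (simp add: homog_def)

lemma keys_subset_Pmn_iff: "Poly_Mapping.keys p \<subseteq> Pmn d n \<longleftrightarrow> p \<in> Spoly n \<and> homog d p"
  by (auto simp: Pmn_def Spoly_def homog_def)

section \<open>Linear changes of coordinates\<close>

definition image_mon :: "nat \<Rightarrow> (nat \<Rightarrow> nat \<Rightarrow> 'k::comm_ring_1) \<Rightarrow> expo \<Rightarrow> 'k mpoly" where
  "image_mon n g A = (\<Prod>i\<in>Poly_Mapping.keys A. lin_form n g i ^ Poly_Mapping.lookup A i)"

definition mat_mul :: "nat \<Rightarrow> (nat \<Rightarrow> nat \<Rightarrow> 'k::comm_ring_1) \<Rightarrow> (nat \<Rightarrow> nat \<Rightarrow> 'k) \<Rightarrow> nat \<Rightarrow> nat \<Rightarrow> 'k" where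
  "mat_mul n g h i j = (\<Sum>k\<le>n. g i k * h k j)"

definition id_mat :: "nat \<Rightarrow> nat \<Rightarrow> 'k::comm_ring_1" where
  "id_mat i j = (if i = j then 1 else 0)"

lemma act_eq_sum_image_mon:
  "act n g p = (\<Sum>A\<in>Poly_Mapping.keys p. const (Poly_Mapping.lookup p A) * image_mon n g A)"
  by (simp add: act_def image_mon_def)

lemma image_mon_superset:
  assumes "finite S" "Poly_Mapping.keys A \<subseteq> S"
  shows "image_mon n g A = (\<Prod>i\<in>S. lin_form n g i ^ Poly_Mapping.lookup A i)"
  unfolding image_mon_def using assms
  by (intro prod.mono_neutral_left) (auto simp: in_keys_iff)

lemma image_mon_add: "image_mon n g (A + B) = image_mon n g A * image_mon n g B"
proof -
  let ?S = "Poly_Mapping.keys A \<union> Poly_Mapping.keys B"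
  have "image_mon n g (A + B) = (\<Prod>i\<in>?S. lin_form n g i ^ Poly_Mapping.lookup (A + B) i)"
    using keys_add[of A B] by (intro image_mon_superset) auto
  also have "\<dots> = (\<Prod>i\<in>?S. lin_form n g i ^ Poly_Mapping.lookup A i)
                  * (\<Prod>i\<in>?S. lin_form n g i ^ Poly_Mapping.lookup B i)"
    by (simp add: lookup_add power_add prod.distrib)
  also have "\<dots> = image_mon n g A * image_mon n g B"
    by (subst (1 2) image_mon_superset[of ?S]) auto
  finally show ?thesis .
qed

lemma image_mon_single: "image_mon n g (Poly_Mapping.single i k) = lin_form n g i ^ k"
  by (cases "k = 0") (auto simp: image_mon_def)

lemma act_superset:
  assumes "finite S" "Poly_Mapping.keys p \<subseteq> S"
  shows "act n g p = (\<Sum>A\<in>S. const (Poly_Mapping.lookup p A) * image_mon n g A)"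
  unfolding act_eq_sum_image_mon using assms
  by (intro sum.mono_neutral_left) (auto simp: in_keys_iff)

lemma act_add: "act n g (p + q) = act n g p + act n g q"
proof -
  let ?S = "Poly_Mapping.keys p \<union> Poly_Mapping.keys q"
  have "act n g (p + q) = (\<Sum>A\<in>?S. const (Poly_Mapping.lookup (p + q) A) * image_mon n g A)"
    using keys_add[of p q] by (intro act_superset) auto
  also have "\<dots> = (\<Sum>A\<in>?S. const (Poly_Mapping.lookup p A) * image_mon n g A)
                  + (\<Sum>A\<in>?S. const (Poly_Mapping.lookup q A) * image_mon n g A)"
    by (simp add: lookup_add const_add distrib_right sum.distrib)
  also have "\<dots> = act n g p + act n g q"
    by (subst (1 2) act_superset[of ?S]) auto
  finally show ?thesis .
qed

lemma act_0 [simp]: "act n g 0 = 0"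
  by (simp add: act_def)

lemma act_sum: "act n g (sum f S) = (\<Sum>x\<in>S. act n g (f x))"
  by (induction S rule: infinite_finite_induct) (auto simp: act_add)

lemma act_const_mult: "act n g (const c * p) = const c * act n g p"
proof -
  have "act n g (const c * p)
      = (\<Sum>A\<in>Poly_Mapping.keys p. const (Poly_Mapping.lookup (const c * p) A) * image_mon n g A)"
    by (rule act_superset) (auto simp: in_keys_iff lookup_const_mult)
  also have "\<dots> = const c * act n g p"
    by (simp add: act_eq_sum_image_mon lookup_const_mult sum_distrib_left const_mult[symmetric] mult.assoc)
  finally show ?thesis .
qed

lemma act_const_mult_mon: "act n g (const a * mon A) = const a * image_mon n g A"
  by (simp add: act_eq_sum_image_mon const_mult_mon lookup_single)

lemma act_mon: "act n g (mon A) = image_mon n g A"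
  using act_const_mult_mon[of n g 1 A] by simp

lemma act_diff: "act n g (p - q) = act n g p - act n g q"
  using act_add[of n g "p - q" q] by simp

lemma act_mult: "act n g (p * q) = act n g p * act n g q"
proof -
  let ?P = "Poly_Mapping.keys p" and ?Q = "Poly_Mapping.keys q"
  have "p * q = (\<Sum>A\<in>?P. const (Poly_Mapping.lookup p A) * mon A) * (\<Sum>B\<in>?Q. const (Poly_Mapping.lookup q B) * mon B)"
    by (subst (1) mpoly_eq_sum_mon[of ?P p], simp, simp, subst (1) mpoly_eq_sum_mon[of ?Q q]) auto
  also have "\<dots> = (\<Sum>A\<in>?P. \<Sum>B\<in>?Q. const (Poly_Mapping.lookup p A * Poly_Mapping.lookup q B) * mon (A + B))"
    by (simp add: sum_product const_mult[symmetric] mon_mult[symmetric] ac_simps)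
  finally have "act n g (p * q)
      = (\<Sum>A\<in>?P. \<Sum>B\<in>?Q. const (Poly_Mapping.lookup p A * Poly_Mapping.lookup q B) * image_mon n g (A + B))"
    by (simp add: act_sum act_const_mult_mon)
  also have "\<dots> = (\<Sum>A\<in>?P. const (Poly_Mapping.lookup p A) * image_mon n g A)
                  * (\<Sum>B\<in>?Q. const (Poly_Mapping.lookup q B) * image_mon n g B)"
    by (simp add: sum_product image_mon_add const_mult[symmetric] ac_simps)
  finally show ?thesis by (simp add: act_eq_sum_image_mon)
qed

lemma act_prod: "act n g (prod f S) = (\<Prod>x\<in>S. act n g (f x))"
  by (induction S rule: infinite_finite_induct) (auto simp: act_mult act_mon[of n g 0, simplified] image_mon_def)

lemma act_power: "act n g (p ^ k) = act n g p ^ k"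
  by (induction k) (auto simp: act_mult act_mon[of n g 0, simplified] image_mon_def)

lemma act_var: "act n g (var i) = lin_form n g i"
  by (simp add: var_def act_mon image_mon_def)

lemma act_lin_form: "act n g (lin_form n h i) = lin_form n (mat_mul n g h) i"
proof -
  have "act n g (lin_form n h i) = (\<Sum>j\<le>n. const (h j i) * (\<Sum>k\<le>n. const (g k j) * var k))"
    by (simp add: lin_form_def act_sum act_const_mult act_var)
  also have "\<dots> = (\<Sum>j\<le>n. \<Sum>k\<le>n. const (g k j * h j i) * var k)"
    by (simp add: sum_distrib_left const_mult[symmetric] ac_simps)
  also have "\<dots> = (\<Sum>k\<le>n. \<Sum>j\<le>n. const (g k j * h j i) * var k)"
    by (rule sum.swap)
  also have "\<dots> = lin_form n (mat_mul n g h) i"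
    by (simp add: lin_form_def mat_mul_def const_sum sum_distrib_right)
  finally show ?thesis .
qed

lemma act_act: "act n g (act n h p) = act n (mat_mul n g h) p"
  by (simp add: act_eq_sum_image_mon[of n h] act_eq_sum_image_mon[of n "mat_mul n g h"]
      act_sum act_const_mult image_mon_def act_prod act_power act_lin_form)

lemma act_cong:
  assumes "p \<in> Spoly n" "\<And>i j. i \<le> n \<Longrightarrow> j \<le> n \<Longrightarrow> g i j = g' i j"
  shows "act n g p = act n g' p"
  using assms unfolding act_eq_sum_image_mon image_mon_def lin_form_def
  by (intro sum.cong prod.cong refl arg_cong2[where f="(*)"] arg_cong2[where f="(^)"])
    (force simp: Spoly_def is_expo_def subset_iff)

lemma lin_form_id_mat: "i \<le> n \<Longrightarrow> lin_form n id_mat i = var i"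
proof -
  assume "i \<le> n"
  have "lin_form n id_mat i = (\<Sum>j\<le>n. if j = i then var i else 0)"
    unfolding lin_form_def id_mat_def by (intro sum.cong refl) auto
  then show ?thesis using \<open>i \<le> n\<close> by simp
qed

lemma image_mon_id_mat: "is_expo n A \<Longrightarrow> image_mon n id_mat A = mon A"
proof -
  assume A: "is_expo n A"
  have "image_mon n id_mat A = (\<Prod>i\<in>Poly_Mapping.keys A. var i ^ Poly_Mapping.lookup A i)"
    unfolding image_mon_def using A by (intro prod.cong refl) (auto simp: lin_form_id_mat is_expo_def)
  also have "\<dots> = mon A"
    using poly_mapping_eq_sum_single[of "Poly_Mapping.keys A" A] by (simp add: var_power prod_mon)
  finally show ?thesis .
qed

lemma act_id_mat: "p \<in> Spoly n \<Longrightarrow> act n id_mat p = p"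
  unfolding act_eq_sum_image_mon
  by (subst (2) mpoly_eq_sum_mon[of "Poly_Mapping.keys p" p])
    (auto simp: Spoly_def image_mon_id_mat intro!: sum.cong)

lemma act_inverse:
  assumes "p \<in> Spoly n" "\<And>i j. i \<le> n \<Longrightarrow> j \<le> n \<Longrightarrow> mat_mul n g h i j = id_mat i j"
  shows "act n g (act n h p) = p"
  using act_cong[OF assms] act_id_mat[OF assms(1)] by (simp add: act_act)

lemma Spoly_lin_form: "lin_form n g i \<in> Spoly n"
  unfolding lin_form_def var_def by (auto intro!: Spoly_sum Spoly_mult Spoly_mon is_expo_single)

lemma homog_lin_form: "homog 1 (lin_form n g i)"
  unfolding lin_form_def var_def
  by (intro homog_sum homog_const_mult) (metis homog_mon tdeg_single)

lemma Spoly_act: "act n g p \<in> Spoly n"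
  by (simp add: act_eq_sum_image_mon image_mon_def Spoly_sum Spoly_mult Spoly_prod Spoly_power Spoly_lin_form)

lemma homog_image_mon: "homog (tdeg A) (image_mon n g A)"
proof -
  have "homog (\<Sum>i\<in>Poly_Mapping.keys A. Poly_Mapping.lookup A i * 1) (image_mon n g A)"
    unfolding image_mon_def by (intro homog_prod homog_power homog_lin_form)
  then show ?thesis by (simp add: tdeg_def)
qed

lemma keys_act_subset_Pmn:
  assumes "Poly_Mapping.keys p \<subseteq> Pmn d n"
  shows "Poly_Mapping.keys (act n g p) \<subseteq> Pmn d n"
proof -
  have "homog d (act n g p)"
    unfolding act_eq_sum_image_mon using assms homog_image_mon
    by (intro homog_sum homog_const_mult) (force simp: Pmn_def)
  then show ?thesis using Spoly_act keys_subset_Pmn_iff by blast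
qed

text \<open>The subtraction is truncated at \<open>0\<close>, so \<open>move_expo j i k A\<close> is meaningful only for
  \<open>k \<le> A\<^sub>i\<close>.\<close>

definition move_expo :: "nat \<Rightarrow> nat \<Rightarrow> nat \<Rightarrow> expo \<Rightarrow> expo" where
  "move_expo j i k A = A + Poly_Mapping.single j k - Poly_Mapping.single i k"

lemma lookup_move_expo:
  assumes "j \<noteq> i"
  shows "Poly_Mapping.lookup (move_expo j i k A) l =
    (if l = i then Poly_Mapping.lookup A i - k
     else if l = j then Poly_Mapping.lookup A j + k else Poly_Mapping.lookup A l)"
  using assms by (auto simp: move_expo_def lookup_minus lookup_add lookup_single when_def)

lemma move_expo_0 [simp]: "move_expo j i 0 A = A"
  by (simp add: move_expo_def)

lemma move_expo_move_expo: "j \<noteq> i \<Longrightarrow> move_expo j i k (move_expo j i l A) = move_expo j i (l + k) A"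
  by (auto simp: expo_eq_iff lookup_move_expo)

lemma addDelta_eq_move_expo: "addDelta A i = move_expo (i - 1) i 1 A"
  by (simp add: addDelta_def move_expo_def)

lemma move_expo_inj:
  assumes "j \<noteq> i" "k \<le> Poly_Mapping.lookup A i" "k' \<le> Poly_Mapping.lookup A i"
    and "move_expo j i k A = move_expo j i k' A"
  shows "k = k'"
proof -
  have "Poly_Mapping.lookup (move_expo j i k A) i = Poly_Mapping.lookup (move_expo j i k' A) i"
    using assms(4) by simp
  then show ?thesis using assms(1-3) by (simp add: lookup_move_expo)
qed

lemma move_expo_eq_iff:
  assumes "j \<noteq> i"
  shows "(k \<le> Poly_Mapping.lookup B i \<and> move_expo j i k B = C) \<longleftrightarrow>
         (k \<le> Poly_Mapping.lookup C j \<and> B = move_expo i j k C)"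
proof
  assume a: "k \<le> Poly_Mapping.lookup B i \<and> move_expo j i k B = C"
  have l: "Poly_Mapping.lookup C l = Poly_Mapping.lookup (move_expo j i k B) l" for l
    using a by simp
  have "B = move_expo i j k C"
    unfolding expo_eq_iff using l a assms by (auto simp: lookup_move_expo)
  then show "k \<le> Poly_Mapping.lookup C j \<and> B = move_expo i j k C"
    using l[of j] assms by (simp add: lookup_move_expo)
next
  assume a: "k \<le> Poly_Mapping.lookup C j \<and> B = move_expo i j k C"
  have l: "Poly_Mapping.lookup B l = Poly_Mapping.lookup (move_expo i j k C) l" for l
    using a by simp
  have "move_expo j i k B = C"
    unfolding expo_eq_iff using l a assms by (auto simp: lookup_move_expo)
  then show "k \<le> Poly_Mapping.lookup B i \<and> move_expo j i k B = C"
    using l[of i] assms by (simp add: lookup_move_expo)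
qed

lemma tdeg_move_expo:
  assumes "k \<le> Poly_Mapping.lookup A i"
  shows "tdeg (move_expo j i k A) = tdeg A"
proof (cases "j = i")
  case False
  have "move_expo j i k A + Poly_Mapping.single i k = A + Poly_Mapping.single j k"
    using assms False by (auto simp: expo_eq_iff lookup_move_expo lookup_add lookup_single when_def)
  then show ?thesis by (metis add_right_cancel tdeg_add tdeg_single)
qed (simp add: move_expo_def)

lemma Pmn_move_expo:
  assumes "A \<in> Pmn m n" "j \<le> n" "k \<le> Poly_Mapping.lookup A i"
  shows "move_expo j i k A \<in> Pmn m n"
proof (cases "j = i")
  case False
  then show ?thesis
    using assms by (auto simp: Pmn_def is_expo_iff lookup_move_expo tdeg_move_expo)
qed (use assms in \<open>simp add: move_expo_def\<close>)

lemma addDelta_not_in_Pmn: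
  assumes "A \<in> Pmn m n" "i \<ge> 1" "Poly_Mapping.lookup A i = 0"
  shows "addDelta A i \<notin> Pmn m n"
proof -
  have "addDelta A i = A + Poly_Mapping.single (i - 1) 1"
    using assms by (auto simp: expo_eq_iff addDelta_eq_move_expo lookup_move_expo lookup_add lookup_single when_def)
  then show ?thesis using assms(1) by (simp add: tdeg_add Pmn_def)
qed

definition diag_mat :: "(nat \<Rightarrow> 'k) \<Rightarrow> nat \<Rightarrow> nat \<Rightarrow> 'k::comm_ring_1" where
  "diag_mat d i j = (if i = j then d i else 0)"

text \<open>Acting by \<open>elem_mat j i s\<close> substitutes \<open>x\<^sub>i \<mapsto> x\<^sub>i + s x\<^sub>j\<close>.\<close>

definition elem_mat :: "nat \<Rightarrow> nat \<Rightarrow> 'k \<Rightarrow> nat \<Rightarrow> nat \<Rightarrow> 'k::comm_ring_1" where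
  "elem_mat j i s a b = (if a = b then 1 else if a = j \<and> b = i then s else 0)"

definition mon_eval :: "(nat \<Rightarrow> 'k::comm_ring_1) \<Rightarrow> expo \<Rightarrow> 'k" where
  "mon_eval d A = (\<Prod>l\<in>Poly_Mapping.keys A. d l ^ Poly_Mapping.lookup A l)"

lemma mon_eval_superset:
  assumes "finite S" "Poly_Mapping.keys A \<subseteq> S"
  shows "mon_eval d A = (\<Prod>l\<in>S. d l ^ Poly_Mapping.lookup A l)"
  unfolding mon_eval_def using assms by (intro prod.mono_neutral_left) (auto simp: in_keys_iff)

lemma mon_eval_add: "mon_eval d (A + B) = mon_eval d A * mon_eval d B"
proof -
  let ?S = "Poly_Mapping.keys A \<union> Poly_Mapping.keys B"
  have "mon_eval d (A + B) = (\<Prod>i\<in>?S. d i ^ Poly_Mapping.lookup (A + B) i)"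
    using keys_add[of A B] by (intro mon_eval_superset) auto
  also have "\<dots> = (\<Prod>i\<in>?S. d i ^ Poly_Mapping.lookup A i) * (\<Prod>i\<in>?S. d i ^ Poly_Mapping.lookup B i)"
    by (simp add: lookup_add power_add prod.distrib)
  also have "\<dots> = mon_eval d A * mon_eval d B"
    by (subst (1 2) mon_eval_superset[of ?S]) auto
  finally show ?thesis .
qed

lemma mon_eval_nonzero:
  fixes d :: "nat \<Rightarrow> 'k::field"
  assumes "is_expo n A" "\<And>l. l \<le> n \<Longrightarrow> d l \<noteq> 0"
  shows "mon_eval d A \<noteq> 0"
  using assms unfolding mon_eval_def is_expo_def by (auto simp: prod_zero_iff)

lemma mon_eval_single_point: "mon_eval (\<lambda>l. if l = l0 then a else 1) A = a ^ Poly_Mapping.lookup A l0"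
proof -
  have "mon_eval (\<lambda>l. if l = l0 then a else 1) A
      = (\<Prod>l\<in>Poly_Mapping.keys A \<union> {l0}. (if l = l0 then a else 1) ^ Poly_Mapping.lookup A l)"
    by (rule mon_eval_superset) auto
  also have "\<dots> = (\<Prod>l\<in>Poly_Mapping.keys A \<union> {l0}. if l = l0 then a ^ Poly_Mapping.lookup A l0 else 1)"
    by (intro prod.cong refl) auto
  also have "\<dots> = a ^ Poly_Mapping.lookup A l0" by (simp add: prod.delta')
  finally show ?thesis .
qed

lemma act_diag_mat_mon:
  assumes "is_expo n A"
  shows "act n (diag_mat d) (mon A) = const (mon_eval d A) * mon A"
proof -
  have "lin_form n (diag_mat d) i = const (d i) * var i" if "i \<le> n" for i
  proof -
    have "lin_form n (diag_mat d) i = (\<Sum>j\<le>n. if j = i then const (d i) * var i else 0)"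
      unfolding lin_form_def diag_mat_def by (intro sum.cong refl) auto
    then show ?thesis using that by simp
  qed
  then have "act n (diag_mat d) (mon A)
      = (\<Prod>i\<in>Poly_Mapping.keys A. (const (d i) * var i) ^ Poly_Mapping.lookup A i)"
    unfolding act_mon image_mon_def using assms by (intro prod.cong refl) (auto simp: is_expo_def)
  also have "\<dots> = const (mon_eval d A) * (\<Prod>i\<in>Poly_Mapping.keys A. var i ^ Poly_Mapping.lookup A i)"
    by (simp add: power_mult_distrib prod.distrib mon_eval_def const_prod const_power)
  also have "(\<Prod>i\<in>Poly_Mapping.keys A. var i ^ Poly_Mapping.lookup A i) = mon A"
    using poly_mapping_eq_sum_single[of "Poly_Mapping.keys A" A] by (simp add: var_power prod_mon)
  finally show ?thesis .
qed

lemma lin_form_elem_mat: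
  assumes "j \<noteq> i" "i \<le> n" "j \<le> n" "l \<le> n"
  shows "lin_form n (elem_mat j i s) l = (if l = i then var i + const s * var j else var l)"
proof -
  have "lin_form n (elem_mat j i s) l
      = (\<Sum>j'\<le>n. (if j' = l then var l else 0) + (if l = i \<and> j' = j then const s * var j else 0))"
    unfolding lin_form_def elem_mat_def using assms by (intro sum.cong refl) auto
  then show ?thesis using assms by (simp add: sum.distrib)
qed

lemma act_elem_mat_mon:
  assumes "j \<noteq> i" "i \<le> n" "j \<le> n" "is_expo n A"
  shows "act n (elem_mat j i s) (mon A) =
    (\<Sum>k\<le>Poly_Mapping.lookup A i.
       const (of_nat (Poly_Mapping.lookup A i choose k) * s ^ k) * mon (move_expo j i k A))"
proof -
  let ?a = "Poly_Mapping.lookup A i"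
  define A' where "A' = A - Poly_Mapping.single i ?a"
  have A: "A = A' + Poly_Mapping.single i ?a"
    by (auto simp: expo_eq_iff A'_def lookup_add lookup_minus lookup_single when_def)
  have A': "is_expo n A'" "Poly_Mapping.lookup A' i = 0"
    using assms(4) by (auto simp: is_expo_iff A'_def lookup_minus)
  have "lin_form n (elem_mat j i s) l = lin_form n id_mat l" if "l \<in> Poly_Mapping.keys A'" for l
  proof -
    have "l \<noteq> i" using that A'(2) by (auto simp: in_keys_iff)
    moreover have "l \<le> n" using that A'(1) by (auto simp: is_expo_def)
    ultimately show ?thesis using assms by (simp add: lin_form_elem_mat lin_form_id_mat)
  qed
  then have "image_mon n (elem_mat j i s) A' = image_mon n id_mat A'"
    unfolding image_mon_def by simp
  also have "\<dots> = mon A'"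
    using A' by (intro image_mon_id_mat)
  finally have "act n (elem_mat j i s) (mon A) = mon A' * (var i + const s * var j) ^ ?a"
    unfolding act_mon by (subst A) (simp add: image_mon_add image_mon_single lin_form_elem_mat assms)
  also have "\<dots> = mon A' * (\<Sum>k\<le>?a. of_nat (?a choose k) * (const s * var j) ^ k * var i ^ (?a - k))"
    by (subst add.commute) (simp add: binomial_ring)
  also have "\<dots> = (\<Sum>k\<le>?a. const (of_nat (?a choose k) * s ^ k)
                     * mon (A' + Poly_Mapping.single j k + Poly_Mapping.single i (?a - k)))"
    by (simp add: sum_distrib_left of_nat_mpoly var_power power_mult_distrib const_power
        const_mult[symmetric] mon_mult[symmetric] ac_simps)
  also have "\<dots> = (\<Sum>k\<le>?a. const (of_nat (?a choose k) * s ^ k) * mon (move_expo j i k A))"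
    using assms(1)
    by (intro sum.cong refl arg_cong2[where f="(*)"] arg_cong[where f=mon])
      (auto simp: expo_eq_iff lookup_move_expo A'_def lookup_add lookup_minus lookup_single when_def)
  finally show ?thesis .
qed

lemma mat_mul_elem_mat_left:
  assumes "a \<le> n" "i \<le> n" "j \<noteq> i"
  shows "mat_mul n (elem_mat j i s) h a b = h a b + (if a = j then s * h i b else 0)"
proof -
  have "mat_mul n (elem_mat j i s) h a b
      = (\<Sum>k\<le>n. (if k = a then h a b else 0) + (if a = j \<and> k = i then s * h i b else 0))"
    unfolding mat_mul_def elem_mat_def using assms by (intro sum.cong refl) auto
  then show ?thesis using assms by (simp add: sum.distrib)
qed

lemma mat_mul_diag_mat_left:
  assumes "a \<le> n"
  shows "mat_mul n (diag_mat d) h a b = d a * h a b"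
proof -
  have "mat_mul n (diag_mat d) h a b = (\<Sum>k\<le>n. if k = a then d a * h a b else 0)"
    unfolding mat_mul_def diag_mat_def by (intro sum.cong refl) auto
  then show ?thesis using assms by simp
qed

lemma mat_mul_elem_mat:
  assumes "a \<le> n" "i \<le> n" "j \<noteq> i"
  shows "mat_mul n (elem_mat j i s) (elem_mat j i t) a b = elem_mat j i (s + t) a b"
  using assms by (auto simp: mat_mul_elem_mat_left elem_mat_def algebra_simps)

lemma elem_mat_commutator:
  assumes "j < l" "l < i" "i \<le> n" "a \<le> n" "b \<le> n"
  shows "mat_mul n (elem_mat j l s) (mat_mul n (elem_mat l i 1) (mat_mul n (elem_mat j l (- s)) (elem_mat l i (- 1)))) a b
    = elem_mat j i s a b"
  using assms by (auto simp: mat_mul_elem_mat_left elem_mat_def)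

lemma elem_mat_0: "elem_mat j i 0 = id_mat"
  by (auto simp: elem_mat_def id_mat_def fun_eq_iff)

lemma elem_mat_in_borel:
  fixes s :: "'k::comm_ring_1"
  assumes "j < i" "i \<le> n"
  shows "elem_mat j i s \<in> borel n"
proof -
  have "mat_mul n (elem_mat j i t) (elem_mat j i (- t)) a b = id_mat a b" if "a \<le> n" for t :: 'k and a b
    using mat_mul_elem_mat[OF that assms(2), of j t "- t" b] assms by (simp add: elem_mat_0)
  from this[where t = s] this[where t = "- s"] show ?thesis
    using assms unfolding borel_def upper_triangular_def invertible_mat_def
    by (auto simp: elem_mat_def mat_mul_def id_mat_def intro!: exI[of _ "elem_mat j i (- s)"])
qed

lemma diag_mat_in_borel:
  fixes d :: "nat \<Rightarrow> 'k::field"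
  assumes "\<And>l. l \<le> n \<Longrightarrow> d l \<noteq> 0"
  shows "diag_mat d \<in> borel n"
  unfolding borel_def upper_triangular_def invertible_mat_def
proof (intro CollectI conjI exI[of _ "diag_mat (\<lambda>l. inverse (d l))"] allI impI)
  fix a b :: nat assume ab: "a \<le> n" "b \<le> n"
  show "(\<Sum>k\<le>n. diag_mat d a k * diag_mat (\<lambda>l. inverse (d l)) k b) = (if a = b then 1 else 0)"
    using mat_mul_diag_mat_left[OF ab(1), of d "diag_mat (\<lambda>l. inverse (d l))" b] assms ab
    by (auto simp: mat_mul_def diag_mat_def)
  have "(\<Sum>k\<le>n. diag_mat (\<lambda>l. inverse (d l)) a k * diag_mat d k b) = inverse (d a) * diag_mat d a b"
    using mat_mul_diag_mat_left[OF ab(1), of "\<lambda>l. inverse (d l)" "diag_mat d" b] by (simp add: mat_mul_def)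
  then show "(\<Sum>k\<le>n. diag_mat (\<lambda>l. inverse (d l)) a k * diag_mat d k b) = (if a = b then 1 else 0)"
    using assms ab by (auto simp: diag_mat_def)
qed (auto simp: diag_mat_def)

definition off_diag_support :: "nat \<Rightarrow> (nat \<Rightarrow> nat \<Rightarrow> 'k::zero) \<Rightarrow> (nat \<times> nat) set" where
  "off_diag_support n U = {(a, b). a < b \<and> b \<le> n \<and> U a b \<noteq> 0}"

lemma finite_off_diag_support: "finite (off_diag_support n U)"
  by (rule finite_subset[of _ "{..n} \<times> {..n}"]) (auto simp: off_diag_support_def)

lemma borel_inverse:
  fixes g :: "nat \<Rightarrow> nat \<Rightarrow> 'k::field"
  assumes g: "g \<in> borel n"
  shows "\<exists>h\<in>borel n. \<forall>a\<le>n. \<forall>b\<le>n. mat_mul n g h a b = id_mat a b \<and> mat_mul n h g a b = id_mat a b"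
    and "\<And>a. a \<le> n \<Longrightarrow> g a a \<noteq> 0"
proof -
  obtain h where h: "\<forall>a\<le>n. \<forall>b\<le>n. (\<Sum>k\<le>n. g a k * h k b) = (if a = b then 1 else 0) \<and>
      (\<Sum>k\<le>n. h a k * g k b) = (if a = b then 1 else 0)"
    using g by (auto simp: borel_def invertible_mat_def)
  have ut: "\<And>a b. a \<le> n \<Longrightarrow> b \<le> n \<Longrightarrow> b < a \<Longrightarrow> g a b = 0"
    using g by (auto simp: borel_def upper_triangular_def)
  have column: "b \<le> n \<Longrightarrow> g b b \<noteq> 0 \<and> (\<forall>a. a \<le> n \<longrightarrow> b < a \<longrightarrow> h a b = 0)" for b
  proof (induction b rule: less_induct)
    case (less b)
    have sum_eq: "(\<Sum>k\<le>n. h a k * g k b) = h a b * g b b" if "a \<le> n" "b \<le> a" for a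
    proof -
      have "(\<Sum>k\<le>n. h a k * g k b) = (\<Sum>k\<le>n. if k = b then h a b * g b b else 0)"
      proof (intro sum.cong refl)
        fix k assume "k \<in> {..n}"
        then show "h a k * g k b = (if k = b then h a b * g b b else 0)"
          using less.IH[of k] ut[of k b] that less.prems by (cases k b rule: linorder_cases) auto
      qed
      then show ?thesis using less.prems by simp
    qed
    have "h b b * g b b = 1" using sum_eq[of b] h less.prems by auto
    then have "g b b \<noteq> 0" by auto
    moreover have "h a b = 0" if "a \<le> n" "b < a" for a
      using sum_eq[of a] h less.prems that \<open>g b b \<noteq> 0\<close> by auto
    ultimately show ?case by auto
  qed
  have "h \<in> borel n" unfolding borel_def upper_triangular_def invertible_mat_def
    using column h by blast
  then show "\<exists>h\<in>borel n. \<forall>a\<le>n. \<forall>b\<le>n. mat_mul n g h a b = id_mat a b \<and> mat_mul n h g a b = id_mat a b"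
    using h by (intro bexI[of _ h]) (simp_all add: mat_mul_def id_mat_def)
  show "g a a \<noteq> 0" if "a \<le> n" for a using column that by blast
qed

lemma sum_power_shift_diff:
  fixes v :: "nat \<Rightarrow> 'k::comm_ring_1 mpoly"
  shows "(\<Sum>k\<le>Suc N. const ((s + 1) ^ k) * v k) - (\<Sum>k\<le>Suc N. const (s ^ k) * v k)
       = (\<Sum>j\<le>N. const (s ^ j) * (\<Sum>k\<in>{Suc j..Suc N}. const (of_nat (k choose j)) * v k))"
proof -
  have "(s + 1) ^ k - s ^ k = (\<Sum>j<k. of_nat (k choose j) * s ^ j)" for k
    by (simp add: binomial_ring lessThan_Suc_atMost[symmetric])
  then have "(\<Sum>k\<le>Suc N. const ((s + 1) ^ k) * v k) - (\<Sum>k\<le>Suc N. const (s ^ k) * v k)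
      = (\<Sum>k\<le>Suc N. \<Sum>j<k. const (of_nat (k choose j) * s ^ j) * v k)"
    by (simp only: sum_subtractf[symmetric] const_diff[symmetric] left_diff_distrib[symmetric]
        const_sum[OF finite_lessThan] sum_distrib_right)
  also have "\<dots> = (\<Sum>j<Suc N. \<Sum>k\<in>{Suc j..Suc N}. const (of_nat (k choose j) * s ^ j) * v k)"
    by (rule sum.nested_swap')
  also have "\<dots> = (\<Sum>j\<le>N. const (s ^ j) * (\<Sum>k\<in>{Suc j..Suc N}. const (of_nat (k choose j)) * v k))"
    unfolding lessThan_Suc_atMost sum_distrib_left
    by (intro sum.cong refl) (simp add: const_mult[symmetric] ac_simps)
  finally show ?thesis .
qed

text \<open>Finite differences in \<open>s\<close>; the top coefficient is recovered by dividing by \<open>N + 1\<close>, which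
  needs characteristic 0.\<close>

lemma coeff_in_subspace:
  fixes V :: "'k::field_char_0 mpoly set"
  assumes add: "\<And>p q. p \<in> V \<Longrightarrow> q \<in> V \<Longrightarrow> p + q \<in> V"
    and scale: "\<And>p a. p \<in> V \<Longrightarrow> const a * p \<in> V"
    and "\<And>s. (\<Sum>k\<le>N. const (s ^ k) * v k) \<in> V" "k \<le> N"
  shows "v k \<in> V"
  using assms(3,4)
proof (induction N arbitrary: v k)
  case 0
  then show ?case by simp
next
  case (Suc N)
  have diff: "p - q \<in> V" if "p \<in> V" "q \<in> V" for p q
    using add[OF that(1) scale[OF that(2), of "- 1"]] by (simp add: const_def single_uminus)
  define w where "w j = (\<Sum>k\<in>{Suc j..Suc N}. const (of_nat (k choose j)) * v k)" for j
  have "(\<Sum>j\<le>N. const (s ^ j) * w j) \<in> V" for s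
    using diff[OF Suc.prems(1)[of "s + 1"] Suc.prems(1)[of s]] unfolding w_def
    by (simp only: sum_power_shift_diff)
  then have w: "j \<le> N \<Longrightarrow> w j \<in> V" for j
    using Suc.IH by blast
  have "const (1 / of_nat (Suc N)) * w N = v (Suc N)"
    by (simp add: w_def mult.assoc[symmetric] const_mult del: of_nat_Suc)
  then have top: "v (Suc N) \<in> V"
    using scale[OF w[OF order.refl]] by metis
  show ?case
  proof (cases "k = Suc N")
    case False
    have "(\<Sum>k\<le>N. const (s ^ k) * v k) \<in> V" for s
      using diff[OF Suc.prems(1)[of s] scale[OF top, of "s ^ Suc N"]] by simp
    then show ?thesis using Suc.IH Suc.prems(2) False by simp
  qed (use top in simp)
qed

section \<open>The deformation ideal in degree \<open>m\<close>\<close>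

locale borel_tangent =
  fixes n m :: nat
    and I :: "'k::field_char_0 mpoly set"
    and c :: "expo \<Rightarrow> expo \<Rightarrow> 'k"
  assumes homog_ideal: "homog_ideal n I"
    and borel_fixed: "borel_fixed n I"
    and tangent: "hilb_tangent n m I c"
begin

abbreviation "F \<equiv> Fset n m I"
abbreviation "R \<equiv> Rset n m I"
abbreviation "J \<equiv> def_ideal n m I c"

text \<open>The generators of \<open>J\<close> are the pairs \<open>(x\<^sup>A, tail A)\<close>, \<open>A \<in> F\<close>, standing for \<open>x\<^sup>A + \<epsilon> tail A\<close>.\<close>

definition tail :: "expo \<Rightarrow> 'k mpoly" where
  "tail A = (\<Sum>B\<in>R. const (c A B) * mon B)"

definition tail_map :: "'k mpoly \<Rightarrow> 'k mpoly" where
  "tail_map p = (\<Sum>A\<in>F. const (Poly_Mapping.lookup p A) * tail A)"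

definition proj_R :: "'k mpoly \<Rightarrow> 'k mpoly" where
  "proj_R p = (\<Sum>B\<in>R. const (Poly_Mapping.lookup p B) * mon B)"

lemma finite_F: "finite F"
  by (rule finite_subset[OF _ finite_Pmn[of m n]]) (auto simp: Fset_def)

lemma finite_R: "finite R"
  by (rule finite_subset[OF _ finite_Pmn[of m n]]) (auto simp: Rset_def)

lemma F_in_Pmn: "A \<in> F \<Longrightarrow> A \<in> Pmn m n"
  and R_in_Pmn: "A \<in> R \<Longrightarrow> A \<in> Pmn m n"
  and F_not_in_R: "A \<in> F \<Longrightarrow> A \<notin> R"
  and Pmn_F_or_R: "A \<in> Pmn m n \<Longrightarrow> A \<in> F \<or> A \<in> R"
  by (auto simp: Fset_def Rset_def)

lemma is_expo_if_F: "A \<in> F \<Longrightarrow> is_expo n A"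
  and is_expo_if_R: "A \<in> R \<Longrightarrow> is_expo n A"
  by (auto simp: Fset_def Rset_def Pmn_def)

lemma coeff_support: "c A B \<noteq> 0 \<Longrightarrow> A \<in> F \<and> B \<in> R"
  using tangent by (auto simp: hilb_tangent_def grass_tangent_def)

lemma lookup_tail: "Poly_Mapping.lookup (tail A) B = c A B"
  unfolding tail_def using finite_R coeff_support by (auto simp: lookup_sum_const_mult_mon)

lemma keys_tail: "Poly_Mapping.keys (tail A) \<subseteq> R"
  unfolding tail_def using finite_R by (rule keys_sum_const_mult_mon)

lemma keys_tail_subset_Pmn: "Poly_Mapping.keys (tail A) \<subseteq> Pmn m n"
  using keys_tail R_in_Pmn by blast

lemma lookup_proj_R: "Poly_Mapping.lookup (proj_R p) B = (if B \<in> R then Poly_Mapping.lookup p B else 0)"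
  unfolding proj_R_def using finite_R by (simp add: lookup_sum_const_mult_mon)

lemma proj_R_diff: "proj_R (p - q) = proj_R p - proj_R q"
  and proj_R_const_mult: "proj_R (const t * p) = const t * proj_R p"
  by (auto intro!: poly_mapping_eqI simp: lookup_minus lookup_const_mult lookup_proj_R)

lemma proj_R_sum: "proj_R (sum f S) = (\<Sum>x\<in>S. proj_R (f x))"
  by (induction S rule: infinite_finite_induct)
    (auto simp: proj_R_def lookup_add const_add distrib_right sum.distrib)

lemma proj_R_id: "Poly_Mapping.keys p \<subseteq> R \<Longrightarrow> proj_R p = p"
  by (rule poly_mapping_eqI) (auto simp: lookup_proj_R in_keys_iff)

lemma proj_R_eq_0: "Poly_Mapping.keys p \<subseteq> F \<Longrightarrow> proj_R p = 0"
  by (rule poly_mapping_eqI) (auto simp: lookup_proj_R in_keys_iff dest: F_not_in_R)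

lemma keys_diff_proj_R:
  assumes "Poly_Mapping.keys q \<subseteq> Pmn m n"
  shows "Poly_Mapping.keys (q - proj_R q) \<subseteq> F"
  using assms Pmn_F_or_R by (fastforce simp: in_keys_iff lookup_minus lookup_proj_R split: if_splits)

lemma lookup_tail_map: "Poly_Mapping.lookup (tail_map p) C = (\<Sum>A\<in>F. Poly_Mapping.lookup p A * c A C)"
  unfolding tail_map_def by (simp add: lookup_sum lookup_const_mult lookup_tail)

lemma keys_tail_map: "Poly_Mapping.keys (tail_map p) \<subseteq> R"
  using keys_tail keys_sum[of _ F] keys_const_mult_subset unfolding tail_map_def by fastforce

lemma tail_map_const_mult: "tail_map (const t * p) = const t * tail_map p"
  by (rule poly_mapping_eqI) (simp add: lookup_const_mult lookup_tail_map sum_distrib_left mult.assoc)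

lemma tail_map_sum: "tail_map (sum f S) = (\<Sum>x\<in>S. tail_map (f x))"
  by (induction S rule: infinite_finite_induct)
    (auto simp: tail_map_def lookup_add const_add distrib_right sum.distrib)

lemma tail_map_mon: "A \<in> F \<Longrightarrow> tail_map (mon A) = tail A"
proof -
  assume A: "A \<in> F"
  have "tail_map (mon A) = (\<Sum>x\<in>F. if x = A then tail A else 0)"
    unfolding tail_map_def by (intro sum.cong) (auto simp: lookup_mon)
  then show ?thesis using A finite_F by simp
qed

lemma def_ideal_iff:
  "(f0, f1) \<in> J \<longleftrightarrow> f0 \<in> Spoly n \<and> f1 \<in> Spoly n \<and>
     (\<exists>a b. (\<forall>x\<in>F. a x \<in> Spoly n \<and> b x \<in> Spoly n) \<and>
        f0 = (\<Sum>x\<in>F. a x * mon x) \<and> f1 = (\<Sum>x\<in>F. a x * tail x + b x * mon x))"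
  by (simp add: def_ideal_def eps_ideal_def def_gen_def tail_def)

lemma def_ideal_diff:
  assumes "(f0, f1) \<in> J" "(g0, g1) \<in> J"
  shows "(f0 - g0, f1 - g1) \<in> J"
proof -
  obtain a b where ab: "\<forall>x\<in>F. a x \<in> Spoly n \<and> b x \<in> Spoly n" "f0 = (\<Sum>x\<in>F. a x * mon x)"
    "f1 = (\<Sum>x\<in>F. a x * tail x + b x * mon x)"
    using assms(1) unfolding def_ideal_iff by blast
  obtain a' b' where ab': "\<forall>x\<in>F. a' x \<in> Spoly n \<and> b' x \<in> Spoly n" "g0 = (\<Sum>x\<in>F. a' x * mon x)"
    "g1 = (\<Sum>x\<in>F. a' x * tail x + b' x * mon x)"
    using assms(2) unfolding def_ideal_iff by blast
  have "f0 - g0 = (\<Sum>x\<in>F. (a x - a' x) * mon x)"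
    by (simp add: ab ab' left_diff_distrib sum_subtractf)
  moreover have "f1 - g1 = (\<Sum>x\<in>F. (a x - a' x) * tail x + (b x - b' x) * mon x)"
    by (simp add: ab ab' left_diff_distrib sum_subtractf sum.distrib algebra_simps)
  moreover have "f0 - g0 \<in> Spoly n" "f1 - g1 \<in> Spoly n"
    using assms unfolding def_ideal_iff by (auto intro: Spoly_diff)
  moreover have "\<forall>x\<in>F. a x - a' x \<in> Spoly n \<and> b x - b' x \<in> Spoly n"
    using ab(1) ab'(1) by (auto intro: Spoly_diff)
  ultimately show ?thesis
    unfolding def_ideal_iff
    by (intro conjI exI[of _ "\<lambda>x. a x - a' x", OF exI[of _ "\<lambda>x. b x - b' x"]]) simp_all
qed

lemma def_ideal_tail_mapI:
  assumes "Poly_Mapping.keys f \<subseteq> F" "Poly_Mapping.keys g \<subseteq> F"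
  shows "(f, tail_map f + g) \<in> J"
proof -
  let ?a = "\<lambda>x. const (Poly_Mapping.lookup f x)" and ?b = "\<lambda>x. const (Poly_Mapping.lookup g x)"
  have f: "f = (\<Sum>x\<in>F. ?a x * mon x)"
    using assms(1) finite_F by (rule mpoly_eq_sum_mon[rotated])
  moreover have "g = (\<Sum>x\<in>F. ?b x * mon x)"
    using assms(2) finite_F by (rule mpoly_eq_sum_mon[rotated])
  then have "tail_map f + g = (\<Sum>x\<in>F. ?a x * tail x + ?b x * mon x)"
    by (simp add: tail_map_def sum.distrib)
  ultimately have "\<exists>a b. (\<forall>x\<in>F. a x \<in> Spoly n \<and> b x \<in> Spoly n) \<and>
      f = (\<Sum>x\<in>F. a x * mon x) \<and> tail_map f + g = (\<Sum>x\<in>F. a x * tail x + b x * mon x)"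
    by (intro exI[of _ ?a, OF exI[of _ ?b]]) simp
  moreover have "Poly_Mapping.keys (tail_map f + g) \<subseteq> Pmn m n"
    using keys_add[of "tail_map f" g] keys_tail_map[of f] assms(2) F_in_Pmn R_in_Pmn by blast
  moreover have "Poly_Mapping.keys f \<subseteq> Pmn m n"
    using assms(1) F_in_Pmn by blast
  ultimately show ?thesis
    unfolding def_ideal_iff by (blast intro: Spoly_if_keys_Pmn)
qed

lemma keys_def_ideal_fst:
  assumes "(f0, f1) \<in> J" "Poly_Mapping.keys f0 \<subseteq> Pmn m n"
  shows "Poly_Mapping.keys f0 \<subseteq> F"
proof
  fix C assume C: "C \<in> Poly_Mapping.keys f0"
  obtain a where a: "f0 = (\<Sum>x\<in>F. a x * mon x)"
    using assms(1) unfolding def_ideal_iff by blast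
  then obtain x where x: "x \<in> F" "C \<in> Poly_Mapping.keys (a x * mon x)"
    using C keys_sum[of "\<lambda>x. a x * mon x" F] by auto
  then obtain D where "C = D + x"
    using keys_mult[of "a x" "mon x"] by auto
  moreover have "tdeg C = m" "tdeg x = m"
    using C assms(2) x(1) F_in_Pmn by (auto simp: Pmn_def)
  ultimately show "C \<in> F" using x(1) by (simp add: tdeg_add tdeg_eq_0_iff)
qed

text \<open>This is the only use of flatness.\<close>

lemma def_ideal_normal_form:
  assumes "(f0, f1) \<in> J" "Poly_Mapping.keys f0 \<subseteq> Pmn m n" "Poly_Mapping.keys f1 \<subseteq> Pmn m n"
  shows "Poly_Mapping.keys f0 \<subseteq> F" "proj_R f1 = tail_map f0"
proof -
  show f0: "Poly_Mapping.keys f0 \<subseteq> F" by (rule keys_def_ideal_fst[OF assms(1,2)])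
  have "(0, f1 - tail_map f0) \<in> J"
    using def_ideal_diff[OF assms(1) def_ideal_tail_mapI[OF f0, of 0]] by simp
  moreover have "f1 - tail_map f0 \<in> Spoly n"
    using assms(3) keys_tail_map[of f0] R_in_Pmn
    by (intro Spoly_diff Spoly_if_keys_Pmn[of _ m]) auto
  ultimately obtain h where "(f1 - tail_map f0, h) \<in> J"
    using tangent unfolding hilb_tangent_def eps_flat_def by blast
  moreover have "Poly_Mapping.keys (f1 - tail_map f0) \<subseteq> Pmn m n"
    using keys_diff[of f1 "tail_map f0"] assms(3) keys_tail_map[of f0] R_in_Pmn by blast
  ultimately have "proj_R (f1 - tail_map f0) = 0"
    by (intro proj_R_eq_0 keys_def_ideal_fst)
  then show "proj_R f1 = tail_map f0"
    using proj_R_id[OF keys_tail_map[of f0]] by (simp add: proj_R_diff)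
qed

lemma def_gen_scaled: "def_gen n m I (\<lambda>A B. t * c A B) A = (mon A, const t * tail A)"
  by (simp add: def_gen_def tail_def sum_distrib_left const_mult[symmetric] mult.assoc)

text \<open>\<open>I\<close> contains the image of \<open>x\<^sup>A\<close> under \<open>x\<^sub>i \<mapsto> x\<^sub>i + s x\<^sub>j\<close> for every \<open>s\<close>; separating
  the powers of \<open>s\<close> puts each monomial of the binomial expansion into \<open>I\<close>.\<close>

lemma move_expo_in_F:
  assumes A: "A \<in> F" and "j < i" "i \<le> n" and k: "k \<le> Poly_Mapping.lookup A i"
  shows "move_expo j i k A \<in> F"
proof -
  let ?a = "Poly_Mapping.lookup A i"
  have I_add: "p + q \<in> I" if "p \<in> I" "q \<in> I" for p q
    using homog_ideal that by (auto simp: homog_ideal_def is_ideal_def)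
  have I_scale: "const a * p \<in> I" if "p \<in> I" for p a
    using homog_ideal that by (auto simp: homog_ideal_def is_ideal_def)
  have "act n (elem_mat j i s) (mon A) \<in> I" for s
    using borel_fixed elem_mat_in_borel[OF assms(2,3)] A by (auto simp: borel_fixed_def Fset_def)
  then have "(\<Sum>k\<le>?a. const (s ^ k) * (const (of_nat (?a choose k)) * mon (move_expo j i k A))) \<in> I" for s
    using assms is_expo_if_F[OF A] by (simp add: act_elem_mat_mon mult.assoc[symmetric] const_mult ac_simps)
  then have "const (of_nat (?a choose k)) * mon (move_expo j i k A) \<in> I"
    using coeff_in_subspace[where V = I and N = ?a and k = k
        and v = "\<lambda>k. const (of_nat (?a choose k)) * mon (move_expo j i k A)"]
      I_add I_scale k by blast
  then have "const (1 / of_nat (?a choose k)) * (const (of_nat (?a choose k)) * mon (move_expo j i k A)) \<in> I"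
    by (rule I_scale)
  then have "mon (move_expo j i k A) \<in> I"
    using k by (simp add: mult.assoc[symmetric] const_mult)
  moreover have "move_expo j i k A \<in> Pmn m n"
    using assms F_in_Pmn by (intro Pmn_move_expo) auto
  ultimately show ?thesis by (simp add: Fset_def)
qed

lemma addDelta_in_F:
  "A \<in> F \<Longrightarrow> i \<in> {1..n} \<Longrightarrow> 1 \<le> Poly_Mapping.lookup A i \<Longrightarrow> addDelta A i \<in> F"
  using move_expo_in_F[of A "i - 1" i 1] by (simp add: addDelta_eq_move_expo)

lemma move_expo_in_R:
  assumes C: "C \<in> R" and ji: "j < i" "i \<le> n" and k: "k \<le> Poly_Mapping.lookup C j"
  shows "move_expo i j k C \<in> R"
proof (rule ccontr)
  assume "move_expo i j k C \<notin> R"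
  then have "move_expo i j k C \<in> F"
    using Pmn_F_or_R Pmn_move_expo[OF R_in_Pmn[OF C], where j = i and i = j and k = k] ji k by auto
  then have "move_expo j i k (move_expo i j k C) \<in> F"
    by (rule move_expo_in_F) (use ji in \<open>auto simp: lookup_move_expo\<close>)
  also have "move_expo j i k (move_expo i j k C) = C"
    using ji k by (auto simp: expo_eq_iff lookup_move_expo)
  finally show False using C F_not_in_R by blast
qed

end

context borel_tangent
begin

text \<open>\<open>scales g t\<close>: \<open>g\<close> maps each generator \<open>(x\<^sup>A, tail A)\<close> of \<open>J\<close> into the deformation ideal of
  \<open>t c\<close> (compare \<open>def_ideal_normal_form\<close>), i.e. \<open>g\<close> acts on the tangent vector as multiplication
  by \<open>t\<close>.\<close>

definition scales :: "(nat \<Rightarrow> nat \<Rightarrow> 'k) \<Rightarrow> 'k \<Rightarrow> bool" where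
  "scales g t \<longleftrightarrow> t \<noteq> 0 \<and> (\<forall>A\<in>F. Poly_Mapping.keys (act n g (mon A)) \<subseteq> F) \<and>
     (\<forall>A\<in>F. proj_R (act n g (tail A)) = const t * tail_map (act n g (mon A)))"

lemma act_eq_sum_F:
  assumes "Poly_Mapping.keys p \<subseteq> F"
  shows "act n g p = (\<Sum>A\<in>F. const (Poly_Mapping.lookup p A) * act n g (mon A))"
  by (subst mpoly_eq_sum_mon[OF finite_F assms]) (simp add: act_sum act_const_mult)

lemma scales_keys:
  assumes "scales g t" "Poly_Mapping.keys p \<subseteq> F"
  shows "Poly_Mapping.keys (act n g p) \<subseteq> F"
proof -
  have "Poly_Mapping.keys (const (Poly_Mapping.lookup p A) * act n g (mon A)) \<subseteq> F" if "A \<in> F" for A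
    using assms(1) that keys_const_mult_subset unfolding scales_def by blast
  then show ?thesis
    unfolding act_eq_sum_F[OF assms(2)] using keys_sum by fastforce
qed

lemma scales_tail_map:
  assumes "scales g t" "Poly_Mapping.keys p \<subseteq> F"
  shows "proj_R (act n g (tail_map p)) = const t * tail_map (act n g p)"
proof -
  have "proj_R (act n g (tail_map p)) = (\<Sum>A\<in>F. const (Poly_Mapping.lookup p A) * proj_R (act n g (tail A)))"
    by (simp add: tail_map_def act_sum act_const_mult proj_R_sum proj_R_const_mult)
  also have "\<dots> = (\<Sum>A\<in>F. const (Poly_Mapping.lookup p A) * (const t * tail_map (act n g (mon A))))"
    using assms(1) unfolding scales_def by (intro sum.cong refl) auto
  also have "\<dots> = const t * tail_map (act n g p)"
    by (simp add: act_eq_sum_F[OF assms(2)] tail_map_sum tail_map_const_mult sum_distrib_left ac_simps)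
  finally show ?thesis .
qed

lemma scales_mat_mul:
  assumes g: "scales g t1" and h: "scales h t2"
  shows "scales (mat_mul n g h) (t1 * t2)"
  unfolding scales_def
proof (intro conjI ballI)
  show "t1 * t2 \<noteq> 0" using g h by (simp add: scales_def)
  fix A assume A: "A \<in> F"
  have hA: "Poly_Mapping.keys (act n h (mon A)) \<subseteq> F" using h A by (simp add: scales_def)
  show "Poly_Mapping.keys (act n (mat_mul n g h) (mon A)) \<subseteq> F"
    using scales_keys[OF g hA] by (simp add: act_act)
  let ?q = "act n h (tail A)"
  have "Poly_Mapping.keys (?q - proj_R ?q) \<subseteq> F"
    by (intro keys_diff_proj_R keys_act_subset_Pmn keys_tail_subset_Pmn)
  then have "proj_R (act n g (?q - proj_R ?q)) = 0"
    by (intro proj_R_eq_0 scales_keys[OF g])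
  then have "proj_R (act n (mat_mul n g h) (tail A)) = proj_R (act n g (proj_R ?q))"
    by (simp add: act_act[symmetric] act_diff proj_R_diff)
  also have "proj_R ?q = const t2 * tail_map (act n h (mon A))"
    using h A by (simp add: scales_def)
  finally show "proj_R (act n (mat_mul n g h) (tail A)) = const (t1 * t2) * tail_map (act n (mat_mul n g h) (mon A))"
    by (simp add: act_const_mult proj_R_const_mult scales_tail_map[OF g hA] act_act const_mult[symmetric] ac_simps)
qed

lemma scales_cong:
  assumes "scales g t" "\<And>a b. a \<le> n \<Longrightarrow> b \<le> n \<Longrightarrow> g a b = g' a b"
  shows "scales g' t"
proof -
  have "act n g p = act n g' p" if "p \<in> Spoly n" for p by (rule act_cong[OF that assms(2)])
  moreover have "tail A \<in> Spoly n" for A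
    using keys_tail_subset_Pmn by (rule Spoly_if_keys_Pmn)
  ultimately show ?thesis
    using assms(1) Spoly_mon[OF is_expo_if_F] unfolding scales_def by metis
qed

lemma scales_id_mat: "scales id_mat 1"
proof -
  have "tail A \<in> Spoly n" for A
    using keys_tail_subset_Pmn by (rule Spoly_if_keys_Pmn)
  then show ?thesis
    unfolding scales_def
    by (simp add: act_id_mat Spoly_mon is_expo_if_F proj_R_id[OF keys_tail] tail_map_mon)
qed

text \<open>\<open>borel_act_is\<close> describes \<open>g\<close> through the preimages of the generators, that is through \<open>g\<inverse>\<close>.\<close>

lemma borel_act_imp_scales_inverse:
  assumes "borel_act_is n m I g c (\<lambda>A B. t * c A B)"
    and hg: "\<And>a b. a \<le> n \<Longrightarrow> b \<le> n \<Longrightarrow> mat_mul n h g a b = id_mat a b"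
    and A: "A \<in> F"
  shows "Poly_Mapping.keys (act n h (mon A)) \<subseteq> F"
    and "const t * proj_R (act n h (tail A)) = tail_map (act n h (mon A))"
proof -
  have "(mon A, const t * tail A) \<in> act_eps n g J"
    using assms(1) A unfolding borel_act_is_def by (metis def_gen_scaled)
  then obtain f0 f1 where f: "(f0, f1) \<in> J" "act n g f0 = mon A" "act n g f1 = const t * tail A"
    unfolding act_eps_def by auto
  have "f0 \<in> Spoly n" "f1 \<in> Spoly n" using f(1) unfolding def_ideal_iff by auto
  then have f0: "f0 = act n h (mon A)" and f1: "f1 = const t * act n h (tail A)"
    using act_inverse[OF _ hg] f(2,3) by (metis act_const_mult)+
  have "Poly_Mapping.keys f0 \<subseteq> Pmn m n"
    unfolding f0 using A F_in_Pmn by (intro keys_act_subset_Pmn) auto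
  moreover have "Poly_Mapping.keys f1 \<subseteq> Pmn m n"
    unfolding f1 using keys_const_mult_subset keys_act_subset_Pmn[OF keys_tail_subset_Pmn] by blast
  ultimately show "Poly_Mapping.keys (act n h (mon A)) \<subseteq> F"
    and "const t * proj_R (act n h (tail A)) = tail_map (act n h (mon A))"
    using def_ideal_normal_form[OF f(1)] f0 f1 by (simp_all add: proj_R_const_mult)
qed

lemma scales_imp_borel_act:
  assumes h: "scales h t"
    and gh: "\<And>a b. a \<le> n \<Longrightarrow> b \<le> n \<Longrightarrow> mat_mul n g h a b = id_mat a b"
  shows "borel_act_is n m I g c (\<lambda>A B. inverse t * c A B)"
  unfolding borel_act_is_def
proof (intro conjI ballI)
  show "grass_tangent n m I (\<lambda>A B. inverse t * c A B)"
    using coeff_support by (auto simp: grass_tangent_def)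
  fix A assume A: "A \<in> F"
  let ?f0 = "act n h (mon A)" and ?q = "act n h (tail A)"
  have t: "t \<noteq> 0" using h by (simp add: scales_def)
  have "Poly_Mapping.keys ?f0 \<subseteq> F" "proj_R ?q = const t * tail_map ?f0"
    using h A by (simp_all add: scales_def)
  moreover have "Poly_Mapping.keys (?q - proj_R ?q) \<subseteq> F"
    by (intro keys_diff_proj_R keys_act_subset_Pmn keys_tail_subset_Pmn)
  ultimately have "(?f0, tail_map ?f0 + const (inverse t) * (?q - proj_R ?q)) \<in> J"
    by (intro def_ideal_tail_mapI) (auto dest: subsetD[OF keys_const_mult_subset])
  also have "tail_map ?f0 + const (inverse t) * (?q - proj_R ?q) = const (inverse t) * ?q"
    using \<open>proj_R ?q = const t * tail_map ?f0\<close> t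
    by (simp add: algebra_simps mult.assoc[symmetric] const_mult)
  finally have "(?f0, const (inverse t) * ?q) \<in> J" .
  moreover have "tail A \<in> Spoly n"
    using keys_tail_subset_Pmn by (rule Spoly_if_keys_Pmn)
  then have "act n g ?f0 = mon A" "act n g (const (inverse t) * ?q) = const (inverse t) * tail A"
    using act_inverse[OF _ gh] Spoly_mon[OF is_expo_if_F[OF A]] by (simp_all add: act_const_mult)
  ultimately show "def_gen n m I (\<lambda>A B. inverse t * c A B) A \<in> act_eps n g J"
    unfolding def_gen_scaled act_eps_def by (auto intro!: image_eqI[of _ _ "(?f0, const (inverse t) * ?q)"])
qed

lemma lookup_act_diag_mat_tail:
  "Poly_Mapping.lookup (act n (diag_mat d) (tail A)) C = c A C * mon_eval d C"
proof -
  have "act n (diag_mat d) (tail A) = (\<Sum>B\<in>R. const (c A B * mon_eval d B) * mon B)"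
    unfolding tail_def act_sum act_const_mult
    by (intro sum.cong refl) (simp add: act_diag_mat_mon is_expo_if_R mult.assoc const_mult)
  then show ?thesis using finite_R coeff_support by (auto simp: lookup_sum_const_mult_mon)
qed

lemma tail_map_act_diag_mat_mon:
  "A \<in> F \<Longrightarrow> tail_map (act n (diag_mat d) (mon A)) = const (mon_eval d A) * tail A"
  by (simp add: act_diag_mat_mon is_expo_if_F tail_map_const_mult tail_map_mon)

text \<open>The coefficients of \<open>s\<^sup>k x\<^sup>C\<close> in \<open>(elem_mat j i s) \<cdot> tail A\<close> and in
  \<open>tail_map ((elem_mat j i s) \<cdot> x\<^sup>A)\<close>.\<close>

definition elem_tail_coeff :: "nat \<Rightarrow> nat \<Rightarrow> expo \<Rightarrow> expo \<Rightarrow> nat \<Rightarrow> 'k" where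
  "elem_tail_coeff j i A C k = (if k \<le> Poly_Mapping.lookup C j
     then of_nat (Poly_Mapping.lookup C i + k choose k) * c A (move_expo i j k C) else 0)"

definition elem_mon_coeff :: "nat \<Rightarrow> nat \<Rightarrow> expo \<Rightarrow> expo \<Rightarrow> nat \<Rightarrow> 'k" where
  "elem_mon_coeff j i A C k = (if k \<le> Poly_Mapping.lookup A i
     then of_nat (Poly_Mapping.lookup A i choose k) * c (move_expo j i k A) C else 0)"

lemma lookup_le_m: "A \<in> F \<or> A \<in> R \<Longrightarrow> Poly_Mapping.lookup A i \<le> m"
  using lookup_le_tdeg[of A i] by (auto simp: Fset_def Rset_def Pmn_def)

lemma lookup_act_elem_mat_tail:
  assumes "j < i" "i \<le> n"
  shows "Poly_Mapping.lookup (act n (elem_mat j i s) (tail A)) C = (\<Sum>k\<le>m. s ^ k * elem_tail_coeff j i A C k)"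
proof -
  have ij: "j \<noteq> i" "j \<le> n" using assms by auto
  let ?t = "\<lambda>B k. if k \<le> Poly_Mapping.lookup B i \<and> move_expo j i k B = C
                   then c A B * of_nat (Poly_Mapping.lookup B i choose k) * s ^ k else 0"
  have "Poly_Mapping.lookup (act n (elem_mat j i s) (tail A)) C
      = (\<Sum>B\<in>R. c A B * (\<Sum>k\<le>Poly_Mapping.lookup B i.
           of_nat (Poly_Mapping.lookup B i choose k) * s ^ k * (if move_expo j i k B = C then 1 else 0)))"
    unfolding tail_def act_sum act_const_mult lookup_sum
    by (intro sum.cong refl)
      (simp add: act_elem_mat_mon[OF ij(1) assms(2) ij(2)] is_expo_if_R lookup_sum lookup_const_mult lookup_mon)
  also have "\<dots> = (\<Sum>B\<in>R. \<Sum>k\<le>m. ?t B k)"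
    using lookup_le_m
    by (intro sum.cong refl, subst sum_atMost_extend[of _ m]) (auto simp: sum_distrib_left intro!: sum.cong)
  also have "\<dots> = (\<Sum>k\<le>m. \<Sum>B\<in>R. ?t B k)"
    by (rule sum.swap)
  also have "\<dots> = (\<Sum>k\<le>m. s ^ k * elem_tail_coeff j i A C k)"
  proof (intro sum.cong refl)
    fix k
    let ?X = "move_expo i j k C"
    have "(\<Sum>B\<in>R. ?t B k) = (\<Sum>B\<in>R. if B = ?X then (if k \<le> Poly_Mapping.lookup C j
        then c A ?X * of_nat (Poly_Mapping.lookup ?X i choose k) * s ^ k else 0) else 0)"
      by (intro sum.cong refl) (auto simp: move_expo_eq_iff[OF ij(1)])
    also have "\<dots> = s ^ k * elem_tail_coeff j i A C k"
      using finite_R coeff_support[of A ?X] ij by (auto simp: elem_tail_coeff_def lookup_move_expo)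
    finally show "(\<Sum>B\<in>R. ?t B k) = s ^ k * elem_tail_coeff j i A C k" .
  qed
  finally show ?thesis .
qed

lemma lookup_tail_map_act_elem_mat:
  assumes "j < i" "i \<le> n" "A \<in> F"
  shows "Poly_Mapping.lookup (tail_map (act n (elem_mat j i s) (mon A))) C
       = (\<Sum>k\<le>m. s ^ k * elem_mon_coeff j i A C k)"
proof -
  have ij: "j \<noteq> i" "j \<le> n" using assms by auto
  let ?a = "Poly_Mapping.lookup A i"
  have "Poly_Mapping.lookup (tail_map (act n (elem_mat j i s) (mon A))) C
      = (\<Sum>A'\<in>F. \<Sum>k\<le>?a. if move_expo j i k A = A' then of_nat (?a choose k) * s ^ k * c A' C else 0)"
    unfolding lookup_tail_map act_elem_mat_mon[OF ij(1) assms(2) ij(2) is_expo_if_F[OF assms(3)]]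
    by (auto simp: lookup_sum lookup_const_mult lookup_mon sum_distrib_right intro!: sum.cong)
  also have "\<dots> = (\<Sum>k\<le>?a. \<Sum>A'\<in>F. if move_expo j i k A = A' then of_nat (?a choose k) * s ^ k * c A' C else 0)"
    by (rule sum.swap)
  also have "\<dots> = (\<Sum>k\<le>?a. of_nat (?a choose k) * s ^ k * c (move_expo j i k A) C)"
    using move_expo_in_F[OF assms(3) assms(1,2)] finite_F by (intro sum.cong refl) simp
  also have "\<dots> = (\<Sum>k\<le>m. s ^ k * elem_mon_coeff j i A C k)"
    using lookup_le_m[of A i] assms(3)
    by (subst sum_atMost_extend[of _ m]) (auto simp: elem_mon_coeff_def intro!: sum.cong)
  finally show ?thesis .
qed

lemma elem_mon_coeff_Suc:
  "of_nat (Suc k) * elem_mon_coeff j (Suc j) A C (Suc k)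
    = of_nat (Poly_Mapping.lookup A (Suc j)) * elem_mon_coeff j (Suc j) (addDelta A (Suc j)) C k"
proof (cases "Poly_Mapping.lookup A (Suc j)")
  case (Suc a)
  have "move_expo j (Suc j) (Suc k) A = move_expo j (Suc j) k (addDelta A (Suc j))"
    "Poly_Mapping.lookup (addDelta A (Suc j)) (Suc j) = a"
    using Suc by (simp_all add: addDelta_eq_move_expo move_expo_move_expo lookup_move_expo)
  moreover have "(of_nat (Suc k) * of_nat (Suc a choose Suc k) :: 'k) = of_nat (Suc a) * of_nat (a choose k)"
    by (metis Suc_times_binomial of_nat_mult)
  ultimately show ?thesis
    using Suc by (simp add: elem_mon_coeff_def mult.assoc[symmetric])
qed (simp add: elem_mon_coeff_def)

end

section \<open>Weights and filters\<close>

definition differ_by :: "(nat \<Rightarrow> int) \<Rightarrow> expo \<Rightarrow> expo \<Rightarrow> bool" where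
  "differ_by K A B \<longleftrightarrow> (\<forall>l. int (Poly_Mapping.lookup B l) = int (Poly_Mapping.lookup A l) + K l)"

lemma differ_by_unique_right: "differ_by K A B \<Longrightarrow> differ_by K A B' \<Longrightarrow> B = B'"
  and differ_by_unique_left: "differ_by K A B \<Longrightarrow> differ_by K A' B \<Longrightarrow> A = A'"
  by (auto simp: differ_by_def expo_eq_iff) (metis add_right_cancel of_nat_eq_iff)+

lemma differ_by_addDelta:
  assumes "1 \<le> i" "1 \<le> Poly_Mapping.lookup A i" "1 \<le> Poly_Mapping.lookup B i"
  shows "differ_by K (addDelta A i) (addDelta B i) \<longleftrightarrow> differ_by K A B"
proof -
  have "int (Poly_Mapping.lookup (addDelta B i) l) - int (Poly_Mapping.lookup (addDelta A i) l)
      = int (Poly_Mapping.lookup B l) - int (Poly_Mapping.lookup A l)" for l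
    using assms by (auto simp: addDelta_eq_move_expo lookup_move_expo of_nat_diff)
  then show ?thesis
    unfolding differ_by_def by (metis add_diff_cancel_left' diff_add_cancel)
qed

lemma differ_by_iff_diff:
  "differ_by K A B \<longleftrightarrow> (\<forall>l. int (Poly_Mapping.lookup B l) - int (Poly_Mapping.lookup A l) = K l)"
  by (auto simp: differ_by_def algebra_simps)

lemma differ_by_Pmn:
  assumes "differ_by K A B" "A \<in> Pmn m n" "B \<in> Pmn m n"
  shows "\<forall>i>n. K i = 0" "(\<Sum>i\<le>n. K i) = 0"
proof -
  have K: "K l = int (Poly_Mapping.lookup B l) - int (Poly_Mapping.lookup A l)" for l
    using assms(1) by (simp add: differ_by_def)
  show "\<forall>i>n. K i = 0"
    using assms(2,3) by (simp add: K Pmn_def is_expo_iff)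
  have "(\<Sum>i\<le>n. K i) = int (\<Sum>i\<le>n. Poly_Mapping.lookup B i) - int (\<Sum>i\<le>n. Poly_Mapping.lookup A i)"
    by (simp add: K sum_subtractf)
  also have "\<dots> = int (tdeg B) - int (tdeg A)"
    using assms(2,3) tdeg_eq_sum_atMost[of n A] tdeg_eq_sum_atMost[of n B] by (simp add: Pmn_def)
  finally show "(\<Sum>i\<le>n. K i) = 0" using assms(2,3) by (simp add: Pmn_def)
qed

lemma filter_addDelta:
  assumes "is_filter m n X" "A \<in> X" "i \<in> {1..n}" "1 \<le> Poly_Mapping.lookup A i"
  shows "addDelta A i \<in> X"
proof -
  have "P_step m n A (addDelta A i)"
    using assms by (auto simp: P_step_def is_filter_def)
  then show ?thesis using assms(1,2) by (auto simp: is_filter_def P_le_def)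
qed

lemma is_filterI:
  assumes "X \<subseteq> Pmn m n"
    and "\<And>A i. A \<in> X \<Longrightarrow> i \<in> {1..n} \<Longrightarrow> 1 \<le> Poly_Mapping.lookup A i \<Longrightarrow> addDelta A i \<in> X"
  shows "is_filter m n X"
  unfolding is_filter_def
proof (intro conjI assms(1) ballI allI impI)
  fix A A' assume "A \<in> X" "P_le m n A A'"
  from \<open>P_le m n A A'\<close> \<open>A \<in> X\<close> show "A' \<in> X"
    unfolding P_le_def by (induction rule: rtranclp_induct) (auto simp: P_step_def assms(2))
qed

context borel_tangent
begin

definition F' :: "expo set" where
  "F' = F - {A\<in>F. \<exists>B\<in>R. c A B \<noteq> 0}"

definition F'' :: "expo set" where
  "F'' = F \<union> {B\<in>R. \<exists>A\<in>F. c A B \<noteq> 0}"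

lemma F'_iff: "A \<in> F' \<longleftrightarrow> A \<in> F \<and> (\<forall>B. c A B = 0)"
  using coeff_support by (auto simp: F'_def)

lemma in_F''_if_coeff: "c A B \<noteq> 0 \<Longrightarrow> B \<in> F''"
  using coeff_support by (auto simp: F''_def)

lemma coeff_if_in_F'': "B \<in> F'' \<Longrightarrow> B \<in> R \<Longrightarrow> \<exists>A. c A B \<noteq> 0"
  by (auto simp: F''_def dest: F_not_in_R)

end

section \<open>Sufficiency of the conditions\<close>

locale eigen_conditions = borel_tangent n m I c for n m and I :: "'k::field_char_0 mpoly set" and c +
  fixes K :: "nat \<Rightarrow> int"
  assumes differ_by_K: "\<And>A B. c A B \<noteq> 0 \<Longrightarrow> differ_by K A B"
    and filter_F': "is_filter m n F'"
    and filter_F'': "is_filter m n F''"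
    and ratio: "\<And>A B i. A \<in> F - F' \<Longrightarrow> differ_by K A B \<Longrightarrow> i \<in> {1..n} \<Longrightarrow> addDelta A i \<in> F - F' \<Longrightarrow>
        c (addDelta A i) (addDelta B i)
          = of_nat (Poly_Mapping.lookup B i) / of_nat (Poly_Mapping.lookup A i) * c A B"
begin

lemma coeff_addDelta_nonzero:
  assumes "c A B \<noteq> 0" "i \<in> {1..n}" "1 \<le> Poly_Mapping.lookup B i" "addDelta B i \<in> R"
  shows "1 \<le> Poly_Mapping.lookup A i" "c (addDelta A i) (addDelta B i) \<noteq> 0"
proof -
  have "addDelta B i \<in> F''"
    using filter_addDelta[OF filter_F'' in_F''_if_coeff[OF assms(1)] assms(2,3)] .
  then obtain A'' where A'': "c A'' (addDelta B i) \<noteq> 0"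
    using coeff_if_in_F'' assms(4) by blast
  have "Poly_Mapping.lookup (addDelta B i) i = Poly_Mapping.lookup B i - 1"
    using assms(2) by (auto simp: addDelta_eq_move_expo lookup_move_expo)
  moreover have "int (Poly_Mapping.lookup (addDelta B i) i) = int (Poly_Mapping.lookup A'' i) + K i"
    "int (Poly_Mapping.lookup B i) = int (Poly_Mapping.lookup A i) + K i"
    using differ_by_K[OF A''] differ_by_K[OF assms(1)] by (simp_all add: differ_by_def)
  ultimately show A: "1 \<le> Poly_Mapping.lookup A i" using assms(3) by linarith
  then have "differ_by K (addDelta A i) (addDelta B i)"
    using differ_by_addDelta differ_by_K[OF assms(1)] assms(2,3) by auto
  then show "c (addDelta A i) (addDelta B i) \<noteq> 0"
    using A'' differ_by_K[OF A''] differ_by_unique_left by metis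
qed

lemma coeff_nonzero_if_addDelta:
  assumes "A \<in> F" "c (addDelta A i) X \<noteq> 0" "i \<in> {1..n}"
  obtains B where "1 \<le> Poly_Mapping.lookup A i" "A \<in> F - F'" "c A B \<noteq> 0"
    "differ_by K (addDelta A i) X" "differ_by K A B"
proof -
  have A': "addDelta A i \<in> F - F'"
    using assms(2) coeff_support F'_iff by blast
  then have "1 \<le> Poly_Mapping.lookup A i"
    using addDelta_not_in_Pmn[OF F_in_Pmn[OF assms(1)]] assms(3) F_in_Pmn by fastforce
  moreover have "A \<notin> F'"
    using filter_addDelta[OF filter_F' _ assms(3) \<open>1 \<le> Poly_Mapping.lookup A i\<close>] A' by blast
  then obtain B where "c A B \<noteq> 0"
    using assms(1) F'_iff by blast
  ultimately show ?thesis
    using that assms(1) \<open>A \<notin> F'\<close> differ_by_K[OF assms(2)] differ_by_K by blast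
qed

text \<open>For \<open>A\<^sub>i = 0\<close> the exponent \<open>addDelta A i\<close> has degree \<open>m + 1\<close>, so the right-hand side vanishes
  and the rule says \<open>c A B = 0\<close>.\<close>

lemma ratio_rule:
  assumes A: "A \<in> F" and i: "i \<in> {1..n}" and B: "1 \<le> Poly_Mapping.lookup B i" "addDelta B i \<in> R"
  shows "of_nat (Poly_Mapping.lookup B i) * c A B
       = of_nat (Poly_Mapping.lookup A i) * c (addDelta A i) (addDelta B i)"
proof (cases "c A B = 0 \<and> c (addDelta A i) (addDelta B i) = 0")
  case False
  then have nz: "c (addDelta A i) (addDelta B i) \<noteq> 0"
    using coeff_addDelta_nonzero[OF _ i B] by blast
  then obtain B0 where a: "1 \<le> Poly_Mapping.lookup A i" and "A \<in> F - F'"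
    and "differ_by K (addDelta A i) (addDelta B i)"
    using coeff_nonzero_if_addDelta[OF A _ i] by metis
  moreover have "differ_by K A B"
    using differ_by_addDelta a B(1) i \<open>differ_by K (addDelta A i) (addDelta B i)\<close> by auto
  moreover have "addDelta A i \<in> F - F'"
    using nz coeff_support F'_iff by blast
  ultimately show ?thesis
    using ratio[of A B i] i by (simp add: field_simps)
qed simp

lemma coeff_addDelta_lookup_pos:
  assumes "A \<in> F" "c (addDelta A i) X \<noteq> 0" "i \<in> {1..n}"
  shows "1 \<le> Poly_Mapping.lookup X (i - 1)"
proof -
  obtain B where "differ_by K (addDelta A i) X" "differ_by K A B"
    using coeff_nonzero_if_addDelta[OF assms] by metis
  then have "int (Poly_Mapping.lookup X (i - 1)) = int (Poly_Mapping.lookup B (i - 1)) + 1"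
    using assms(3) by (auto simp: differ_by_def addDelta_eq_move_expo lookup_move_expo)
  then show ?thesis by linarith
qed

lemma elem_tail_coeff_Suc:
  assumes A: "A \<in> F" and C: "C \<in> R" and j: "Suc j \<le> n"
  shows "of_nat (Suc k) * elem_tail_coeff j (Suc j) A C (Suc k)
    = of_nat (Poly_Mapping.lookup A (Suc j)) * elem_tail_coeff j (Suc j) (addDelta A (Suc j)) C k"
proof (cases "Suc k \<le> Poly_Mapping.lookup C j")
  case True
  let ?B = "move_expo (Suc j) j (Suc k) C" and ?X = "move_expo (Suc j) j k C"
  let ?ci = "Poly_Mapping.lookup C (Suc j)" and ?a = "Poly_Mapping.lookup A (Suc j)"
  have B: "Poly_Mapping.lookup ?B (Suc j) = ?ci + Suc k" "addDelta ?B (Suc j) = ?X"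
    using True by (auto simp: expo_eq_iff addDelta_eq_move_expo lookup_move_expo)
  have "?X \<in> R"
    using True j by (intro move_expo_in_R[OF C]) auto
  then have ratio_B: "of_nat (?ci + Suc k) * c A ?B = of_nat ?a * c (addDelta A (Suc j)) ?X"
    using ratio_rule[OF A, of "Suc j" ?B] j B by simp
  have "of_nat (Suc k) * elem_tail_coeff j (Suc j) A C (Suc k)
      = of_nat (Suc k) * of_nat (?ci + Suc k choose Suc k) * c A ?B"
    using True by (simp add: elem_tail_coeff_def)
  also have "\<dots> = of_nat (?ci + k choose k) * (of_nat (?ci + Suc k) * c A ?B)"
  proof -
    have "(of_nat (Suc k) * of_nat (?ci + Suc k choose Suc k) :: 'k) = of_nat (?ci + Suc k) * of_nat (?ci + k choose k)"
      by (metis Suc_times_binomial add_Suc_right of_nat_mult)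
    then show ?thesis by (simp only: ac_simps)
  qed
  also have "\<dots> = of_nat ?a * elem_tail_coeff j (Suc j) (addDelta A (Suc j)) C k"
    unfolding ratio_B using True by (simp add: elem_tail_coeff_def ac_simps)
  finally show ?thesis .
next
  case False
  have "c (addDelta A (Suc j)) (move_expo (Suc j) j k C) = 0" if "k \<le> Poly_Mapping.lookup C j"
  proof -
    have "Poly_Mapping.lookup (move_expo (Suc j) j k C) j = 0"
      using that False by (simp add: lookup_move_expo)
    then show ?thesis
      using coeff_addDelta_lookup_pos[OF A _, of "Suc j"] j by fastforce
  qed
  then show ?thesis using False by (simp add: elem_tail_coeff_def)
qed

lemma elem_tail_coeff_eq_elem_mon_coeff:
  assumes "A \<in> F" "C \<in> R" "Suc j \<le> n"
  shows "elem_tail_coeff j (Suc j) A C k = elem_mon_coeff j (Suc j) A C k"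
  using assms(1)
proof (induction k arbitrary: A)
  case 0
  then show ?case by (simp add: elem_tail_coeff_def elem_mon_coeff_def)
next
  case (Suc k)
  have "of_nat (Poly_Mapping.lookup A (Suc j)) * elem_tail_coeff j (Suc j) (addDelta A (Suc j)) C k
      = of_nat (Poly_Mapping.lookup A (Suc j)) * elem_mon_coeff j (Suc j) (addDelta A (Suc j)) C k"
    using Suc.IH addDelta_in_F[OF Suc.prems, of "Suc j"] assms(3)
    by (cases "Poly_Mapping.lookup A (Suc j)") auto
  then have "of_nat (Suc k) * elem_tail_coeff j (Suc j) A C (Suc k)
      = of_nat (Suc k) * elem_mon_coeff j (Suc j) A C (Suc k)"
    using elem_tail_coeff_Suc[OF Suc.prems assms(2,3)] elem_mon_coeff_Suc by simp
  then show ?case by (simp del: of_nat_Suc)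
qed

lemma scales_elem_mat_adjacent:
  assumes j: "Suc j \<le> n"
  shows "scales (elem_mat j (Suc j) s) 1"
  unfolding scales_def
proof (intro conjI ballI)
  fix A assume A: "A \<in> F"
  have ij: "j < Suc j" "j \<noteq> Suc j" "j \<le> n" using j by auto
  show "Poly_Mapping.keys (act n (elem_mat j (Suc j) s) (mon A)) \<subseteq> F"
    unfolding act_elem_mat_mon[OF ij(2) j ij(3) is_expo_if_F[OF A]]
    using keys_sum keys_const_mult_subset move_expo_in_F[OF A ij(1) j] by fastforce
  show "proj_R (act n (elem_mat j (Suc j) s) (tail A)) = const 1 * tail_map (act n (elem_mat j (Suc j) s) (mon A))"
  proof (rule poly_mapping_eqI)
    fix C
    show "Poly_Mapping.lookup (proj_R (act n (elem_mat j (Suc j) s) (tail A))) C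
        = Poly_Mapping.lookup (const 1 * tail_map (act n (elem_mat j (Suc j) s) (mon A))) C"
    proof (cases "C \<in> R")
      case True
      then show ?thesis
        using elem_tail_coeff_eq_elem_mon_coeff[OF A True j]
        by (simp add: lookup_proj_R lookup_act_elem_mat_tail[OF ij(1) j]
            lookup_tail_map_act_elem_mat[OF ij(1) j A])
    next
      case False
      then show ?thesis
        using keys_tail_map[of "act n (elem_mat j (Suc j) s) (mon A)"]
        by (auto simp: lookup_proj_R in_keys_iff subset_iff)
    qed
  qed
qed simp

lemma scales_elem_mat:
  assumes "j < i" "i \<le> n"
  shows "scales (elem_mat j i s) 1"
  using assms
proof (induction "i - j" arbitrary: i j s rule: less_induct)
  case less
  show ?case
  proof (cases "i = Suc j")
    case True
    then show ?thesis using scales_elem_mat_adjacent less.prems by blast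
  next
    case False
    let ?l = "i - 1"
    have l: "j < ?l" "?l < i" "?l \<le> n" using False less.prems by auto
    have "scales (elem_mat j ?l t) 1" "scales (elem_mat ?l i t) 1" for t
      using less.hyps[of ?l j] l scales_elem_mat_adjacent[of ?l t] less.prems by auto
    then have "scales (mat_mul n (elem_mat j ?l s)
        (mat_mul n (elem_mat ?l i 1) (mat_mul n (elem_mat j ?l (- s)) (elem_mat ?l i (- 1))))) (1 * (1 * (1 * 1)))"
      by (intro scales_mat_mul)
    then have "scales (mat_mul n (elem_mat j ?l s)
        (mat_mul n (elem_mat ?l i 1) (mat_mul n (elem_mat j ?l (- s)) (elem_mat ?l i (- 1))))) 1"
      by simp
    then show ?thesis
      by (rule scales_cong) (use elem_mat_commutator[OF l(1,2) less.prems(2)] in simp)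
  qed
qed

lemma scales_unitriangular:
  assumes "\<And>a. a \<le> n \<Longrightarrow> U a a = 1" "\<And>a b. a \<le> n \<Longrightarrow> b < a \<Longrightarrow> U a b = 0"
  shows "scales U 1"
  using assms
proof (induction "card (off_diag_support n U)" arbitrary: U)
  case 0
  then have "off_diag_support n U = {}" using finite_off_diag_support[of n U] by simp
  then have "U a b = id_mat a b" if "a \<le> n" "b \<le> n" for a b
    using 0 that by (cases a b rule: linorder_cases) (auto simp: off_diag_support_def id_mat_def)
  then show ?case using scales_cong[OF scales_id_mat] by metis
next
  case (Suc N)
  then have "off_diag_support n U \<noteq> {}" by auto
  define b0 where "b0 = Max (snd ` off_diag_support n U)"
  have "b0 \<in> snd ` off_diag_support n U"
    unfolding b0_def using \<open>off_diag_support n U \<noteq> {}\<close> finite_off_diag_support[of n U]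
    by (intro Max_in) auto
  then obtain a0 where a0: "(a0, b0) \<in> off_diag_support n U" by force
  have max: "b \<le> b0" if "(a, b) \<in> off_diag_support n U" for a b
    unfolding b0_def using that finite_off_diag_support by (metis Max_ge finite_imageI image_eqI snd_conv)
  have a0b0: "a0 < b0" "b0 \<le> n" "U a0 b0 \<noteq> 0" using a0 by (auto simp: off_diag_support_def)
  define U' where "U' = (\<lambda>a b. if a = a0 \<and> b = b0 then 0 else U a b)"
  have "off_diag_support n U' = off_diag_support n U - {(a0, b0)}"
    by (auto simp: off_diag_support_def U'_def)
  then have "card (off_diag_support n U') = N"
    using Suc.hyps(2) a0 finite_off_diag_support by simp
  moreover have "U' a a = 1" if "a \<le> n" for a using Suc.prems(1)[OF that] a0b0 by (auto simp: U'_def)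
  moreover have "U' a b = 0" if "a \<le> n" "b < a" for a b using Suc.prems(2)[OF that] by (auto simp: U'_def)
  ultimately have "scales U' 1" using Suc.hyps(1) by blast
  then have "scales (mat_mul n (elem_mat a0 b0 (U a0 b0)) U') (1 * 1)"
    using a0b0 by (intro scales_mat_mul scales_elem_mat)
  moreover have "U' b0 b = (if b = b0 then 1 else 0)" if "b \<le> n" for b
  proof (cases b b0 rule: linorder_cases)
    case greater
    then have "(b0, b) \<notin> off_diag_support n U" using max by force
    then show ?thesis using greater that by (auto simp: U'_def off_diag_support_def)
  qed (use Suc.prems a0b0 in \<open>auto simp: U'_def\<close>)
  then have "mat_mul n (elem_mat a0 b0 (U a0 b0)) U' a b = U a b" if "a \<le> n" "b \<le> n" for a b
    using that a0b0 by (auto simp: mat_mul_elem_mat_left U'_def)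
  ultimately show ?case using scales_cong[of _ 1 U] by simp
qed

lemma add_eq_add_if_coeffs:
  assumes "c A B \<noteq> 0" "c A' B' \<noteq> 0"
  shows "B + A' = B' + A"
proof (rule poly_mapping_eqI)
  fix l
  have "int (Poly_Mapping.lookup B l) = int (Poly_Mapping.lookup A l) + K l"
    "int (Poly_Mapping.lookup B' l) = int (Poly_Mapping.lookup A' l) + K l"
    using differ_by_K[OF assms(1)] differ_by_K[OF assms(2)] by (simp_all add: differ_by_def)
  then show "Poly_Mapping.lookup (B + A') l = Poly_Mapping.lookup (B' + A) l"
    unfolding lookup_add by linarith
qed

lemma scales_diag_mat:
  assumes d: "\<And>l. l \<le> n \<Longrightarrow> d l \<noteq> 0" and nz: "c A0 B0 \<noteq> 0"
  shows "scales (diag_mat d) (mon_eval d B0 / mon_eval d A0)"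
proof -
  let ?t = "mon_eval d B0 / mon_eval d A0"
  have A0B0: "is_expo n A0" "is_expo n B0"
    using coeff_support[OF nz] is_expo_if_F is_expo_if_R by auto
  have A0: "mon_eval d A0 \<noteq> 0"
    by (rule mon_eval_nonzero[OF A0B0(1) d])
  have "?t \<noteq> 0"
    using A0 mon_eval_nonzero[OF A0B0(2) d] by simp
  moreover have "mon_eval d B = ?t * mon_eval d A" if "c A B \<noteq> 0" for A B
  proof -
    have "mon_eval d B * mon_eval d A0 = mon_eval d B0 * mon_eval d A"
      by (simp only: mon_eval_add[symmetric] add_eq_add_if_coeffs[OF that nz])
    then show ?thesis using A0 by (simp add: field_simps)
  qed
  then have "proj_R (act n (diag_mat d) (tail A)) = const ?t * tail_map (act n (diag_mat d) (mon A))"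
    if A: "A \<in> F" for A
  proof (intro poly_mapping_eqI)
    fix C
    show "Poly_Mapping.lookup (proj_R (act n (diag_mat d) (tail A))) C
        = Poly_Mapping.lookup (const ?t * tail_map (act n (diag_mat d) (mon A))) C"
      unfolding lookup_proj_R lookup_act_diag_mat_tail tail_map_act_diag_mat_mon[OF A] lookup_const_mult
        lookup_tail
      using \<open>c A C \<noteq> 0 \<Longrightarrow> mon_eval d C = ?t * mon_eval d A\<close> coeff_support[of A C]
      by (cases "c A C = 0") auto
  qed
  moreover have "Poly_Mapping.keys (act n (diag_mat d) (mon A)) \<subseteq> F" if "A \<in> F" for A
  proof -
    have "Poly_Mapping.keys (const (mon_eval d A) * mon A) \<subseteq> {A}"
      using keys_const_mult_subset by (metis keys_mon)
    then show ?thesis using that by (auto simp: act_diag_mat_mon is_expo_if_F)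
  qed
  ultimately show ?thesis by (simp add: scales_def)
qed

lemma scales_borel:
  assumes g: "g \<in> borel n" and nz: "c A0 B0 \<noteq> 0"
  obtains t where "scales g t"
proof -
  note diag = borel_inverse(2)[OF g]
  have "\<And>a b. a \<le> n \<Longrightarrow> b \<le> n \<Longrightarrow> b < a \<Longrightarrow> g a b = 0"
    using g by (auto simp: borel_def upper_triangular_def)
  then have "scales (\<lambda>a b. g a b / g a a) 1"
    using diag by (intro scales_unitriangular) auto
  then have "scales (mat_mul n (diag_mat (\<lambda>a. g a a)) (\<lambda>a b. g a b / g a a))
      (mon_eval (\<lambda>a. g a a) B0 / mon_eval (\<lambda>a. g a a) A0 * 1)"
    by (intro scales_mat_mul scales_diag_mat[OF _ nz] diag)
  moreover have "mat_mul n (diag_mat (\<lambda>a. g a a)) (\<lambda>a b. g a b / g a a) a b = g a b" if "a \<le> n" "b \<le> n" for a b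
    using that diag by (simp add: mat_mul_diag_mat_left)
  ultimately show ?thesis using that scales_cong by blast
qed

lemma borel_eigenvectorI:
  assumes "c A0 B0 \<noteq> 0"
  shows "borel_eigenvector n m I c"
  unfolding borel_eigenvector_def
proof (intro conjI ballI)
  fix g :: "nat \<Rightarrow> nat \<Rightarrow> 'k" assume "g \<in> borel n"
  then obtain h where h: "h \<in> borel n" and gh: "\<And>a b. a \<le> n \<Longrightarrow> b \<le> n \<Longrightarrow> mat_mul n g h a b = id_mat a b"
    using borel_inverse(1) by blast
  obtain t where "scales h t"
    by (rule scales_borel[OF h assms])
  then show "\<exists>t. borel_act_is n m I g c (\<lambda>A B. t * c A B)"
    using scales_imp_borel_act[OF _ gh] by blast
qed (use assms in blast)

end

section \<open>Necessity of the conditions\<close>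

lemma power_two_inj: "(2 :: 'a::semiring_char_0) ^ x = 2 ^ y \<Longrightarrow> x = y"
  by (metis of_nat_eq_iff of_nat_numeral of_nat_power power_inject_exp Suc_1 lessI)

locale eigen_tangent = borel_tangent n m I c for n m and I :: "'k::field_char_0 mpoly set" and c +
  assumes eigen: "borel_eigenvector n m I c"
begin

lemma scalar_of_diag:
  assumes l: "l \<le> n"
  shows "\<exists>t. \<forall>A C. c A C \<noteq> 0 \<longrightarrow> t * 2 ^ Poly_Mapping.lookup C l = (2::'k) ^ Poly_Mapping.lookup A l"
proof -
  define e where "e = (\<lambda>i. if i = l then (2::'k) else 1)"
  define e' where "e' = (\<lambda>i. if i = l then (1 / 2::'k) else 1)"
  have "diag_mat e' \<in> borel n" by (rule diag_mat_in_borel) (simp add: e'_def)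
  then obtain t where t: "borel_act_is n m I (diag_mat e') c (\<lambda>A B. t * c A B)"
    using eigen unfolding borel_eigenvector_def by blast
  have inv: "mat_mul n (diag_mat e) (diag_mat e') a b = id_mat a b" if "a \<le> n" for a b
    using that by (simp add: mat_mul_diag_mat_left e_def e'_def diag_mat_def id_mat_def)
  have "t * 2 ^ Poly_Mapping.lookup C l = (2::'k) ^ Poly_Mapping.lookup A l" if AC: "c A C \<noteq> 0" for A C
  proof -
    have A: "A \<in> F" and C: "C \<in> R" using coeff_support[OF AC] by auto
    have "Poly_Mapping.lookup (const t * proj_R (act n (diag_mat e) (tail A))) C
        = Poly_Mapping.lookup (tail_map (act n (diag_mat e) (mon A))) C"
      using borel_act_imp_scales_inverse(2)[OF t inv A] by simp
    then have "t * (c A C * 2 ^ Poly_Mapping.lookup C l) = 2 ^ Poly_Mapping.lookup A l * c A C"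
      using C by (simp add: lookup_const_mult lookup_proj_R lookup_act_diag_mat_tail
          tail_map_act_diag_mat_mon[OF A] lookup_tail e_def mon_eval_single_point)
    then show ?thesis using AC by (simp add: ac_simps)
  qed
  then show ?thesis by blast
qed

lemma constant_weight: "\<exists>K. \<forall>A B. c A B \<noteq> 0 \<longrightarrow> differ_by K A B"
proof -
  obtain A0 B0 where nz: "c A0 B0 \<noteq> 0" using eigen by (auto simp: borel_eigenvector_def)
  have "int (Poly_Mapping.lookup C l) = int (Poly_Mapping.lookup A l)
      + (int (Poly_Mapping.lookup B0 l) - int (Poly_Mapping.lookup A0 l))" if AC: "c A C \<noteq> 0" for A C l
  proof (cases "l \<le> n")
    case True
    then obtain t where t: "\<And>A C. c A C \<noteq> 0 \<Longrightarrow> t * 2 ^ Poly_Mapping.lookup C l = (2::'k) ^ Poly_Mapping.lookup A l"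
      using scalar_of_diag by blast
    have "(2::'k) ^ (Poly_Mapping.lookup A l + Poly_Mapping.lookup B0 l)
        = 2 ^ (Poly_Mapping.lookup A0 l + Poly_Mapping.lookup C l)"
      unfolding power_add t[OF AC, symmetric] t[OF nz, symmetric] by (simp add: ac_simps)
    then show ?thesis by (auto dest: power_two_inj)
  next
    case False
    then show ?thesis
      using coeff_support[OF AC] coeff_support[OF nz] is_expo_if_F is_expo_if_R by (simp add: is_expo_iff)
  qed
  then show ?thesis
    unfolding differ_by_def
    by (intro exI[of _ "\<lambda>l. int (Poly_Mapping.lookup B0 l) - int (Poly_Mapping.lookup A0 l)"]) blast
qed

definition weight :: "nat \<Rightarrow> int" where
  "weight = (SOME K. \<forall>A B. c A B \<noteq> 0 \<longrightarrow> differ_by K A B)"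

lemma differ_by_weight: "c A B \<noteq> 0 \<Longrightarrow> differ_by weight A B"
  using someI_ex[OF constant_weight] unfolding weight_def by blast

lemma sum_elem_tail_coeff:
  assumes "differ_by weight A B" "k0 \<le> Poly_Mapping.lookup C j" "move_expo (Suc j) j k0 C = B" "k0 \<le> m"
  shows "(\<Sum>k\<le>m. elem_tail_coeff j (Suc j) A C k) = elem_tail_coeff j (Suc j) A C k0"
proof (rule sum_eq_single_term)
  fix k assume "k \<in> {..m}" "k \<noteq> k0"
  show "elem_tail_coeff j (Suc j) A C k = 0"
  proof (rule ccontr)
    assume "elem_tail_coeff j (Suc j) A C k \<noteq> 0"
    then have "k \<le> Poly_Mapping.lookup C j" "c A (move_expo (Suc j) j k C) \<noteq> 0"
      by (auto simp: elem_tail_coeff_def split: if_splits)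
    then have "move_expo (Suc j) j k C = move_expo (Suc j) j k0 C"
      using differ_by_unique_right[OF differ_by_weight assms(1)] assms(3) by blast
    then show False
      using move_expo_inj[of "Suc j" j] assms(2) \<open>k \<le> Poly_Mapping.lookup C j\<close> \<open>k \<noteq> k0\<close> by auto
  qed
qed (use assms in auto)

lemma sum_elem_mon_coeff:
  assumes "differ_by weight A' C" "k0 \<le> Poly_Mapping.lookup A (Suc j)" "move_expo j (Suc j) k0 A = A'" "k0 \<le> m"
  shows "(\<Sum>k\<le>m. elem_mon_coeff j (Suc j) A C k) = elem_mon_coeff j (Suc j) A C k0"
proof (rule sum_eq_single_term)
  fix k assume "k \<in> {..m}" "k \<noteq> k0"
  show "elem_mon_coeff j (Suc j) A C k = 0"
  proof (rule ccontr)
    assume "elem_mon_coeff j (Suc j) A C k \<noteq> 0"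
    then have "k \<le> Poly_Mapping.lookup A (Suc j)" "c (move_expo j (Suc j) k A) C \<noteq> 0"
      by (auto simp: elem_mon_coeff_def split: if_splits)
    then have "move_expo j (Suc j) k A = move_expo j (Suc j) k0 A"
      using differ_by_unique_left[OF differ_by_weight assms(1)] assms(3) by blast
    then show False
      using move_expo_inj[of j "Suc j"] assms(2) \<open>k \<le> Poly_Mapping.lookup A (Suc j)\<close> \<open>k \<noteq> k0\<close> by auto
  qed
qed (use assms in auto)

text \<open>The eigenvalue of the elementary matrix with \<open>s = -1\<close> is \<open>1\<close>: at a nonzero \<open>c\<^sub>A\<^sub>0\<^sub>B\<^sub>0\<close>
  only the \<open>k = 0\<close> terms survive, by uniqueness of the weight.\<close>

lemma elem_coeff_sums_eq:
  assumes j: "Suc j \<le> n" and A: "A \<in> F" and C: "C \<in> R"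
  shows "(\<Sum>k\<le>m. elem_tail_coeff j (Suc j) A C k) = (\<Sum>k\<le>m. elem_mon_coeff j (Suc j) A C k)"
proof -
  have "elem_mat j (Suc j) (- 1) \<in> borel n" by (rule elem_mat_in_borel) (use j in auto)
  then obtain t where t: "borel_act_is n m I (elem_mat j (Suc j) (- 1)) c (\<lambda>A B. t * c A B)"
    using eigen unfolding borel_eigenvector_def by blast
  have inv: "mat_mul n (elem_mat j (Suc j) 1) (elem_mat j (Suc j) (- 1)) a b = id_mat a b" if "a \<le> n" for a b
    using mat_mul_elem_mat[OF that j, of j 1 "- 1" b] by (simp add: elem_mat_0)
  have sums: "t * (\<Sum>k\<le>m. elem_tail_coeff j (Suc j) A C k) = (\<Sum>k\<le>m. elem_mon_coeff j (Suc j) A C k)"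
    if "A \<in> F" "C \<in> R" for A C
  proof -
    have "Poly_Mapping.lookup (const t * proj_R (act n (elem_mat j (Suc j) 1) (tail A))) C
        = Poly_Mapping.lookup (tail_map (act n (elem_mat j (Suc j) 1) (mon A))) C"
      using borel_act_imp_scales_inverse(2)[OF t inv \<open>A \<in> F\<close>] by simp
    then show ?thesis
      using that j by (simp add: lookup_const_mult lookup_proj_R lookup_act_elem_mat_tail
          lookup_tail_map_act_elem_mat)
  qed
  obtain A0 B0 where nz: "c A0 B0 \<noteq> 0" using eigen by (auto simp: borel_eigenvector_def)
  have "(\<Sum>k\<le>m. elem_tail_coeff j (Suc j) A0 B0 k) = c A0 B0"
    using sum_elem_tail_coeff[OF differ_by_weight[OF nz], of 0 B0 j] by (simp add: elem_tail_coeff_def)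
  moreover have "(\<Sum>k\<le>m. elem_mon_coeff j (Suc j) A0 B0 k) = c A0 B0"
    using sum_elem_mon_coeff[OF differ_by_weight[OF nz], of 0 A0 j] by (simp add: elem_mon_coeff_def)
  ultimately have "t = 1"
    using sums[of A0 B0] coeff_support[OF nz] nz by simp
  then show ?thesis using sums[OF A C] by simp
qed

lemma sum_elem_mon_coeff_addDelta:
  assumes "A \<in> F" "1 \<le> Poly_Mapping.lookup A (Suc j)" "differ_by weight (addDelta A (Suc j)) X"
  shows "(\<Sum>k\<le>m. elem_mon_coeff j (Suc j) A X k)
    = of_nat (Poly_Mapping.lookup A (Suc j)) * c (addDelta A (Suc j)) X"
  using sum_elem_mon_coeff[OF assms(3) assms(2)] assms lookup_le_m[of A "Suc j"]
  by (simp add: elem_mon_coeff_def addDelta_eq_move_expo)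

lemma sum_elem_tail_coeff_addDelta:
  assumes "c A B \<noteq> 0" "1 \<le> Poly_Mapping.lookup B (Suc j)"
  shows "(\<Sum>k\<le>m. elem_tail_coeff j (Suc j) A (addDelta B (Suc j)) k)
    = of_nat (Poly_Mapping.lookup B (Suc j)) * c A B"
proof -
  let ?X = "addDelta B (Suc j)"
  have X: "Poly_Mapping.lookup ?X (Suc j) = Poly_Mapping.lookup B (Suc j) - 1"
    "Poly_Mapping.lookup ?X j = Poly_Mapping.lookup B j + 1" "move_expo (Suc j) j 1 ?X = B"
    using assms(2) by (auto simp: expo_eq_iff addDelta_eq_move_expo lookup_move_expo)
  then show ?thesis
    using sum_elem_tail_coeff[OF differ_by_weight[OF assms(1)], of 1 ?X j] assms
      lookup_le_m[of B "Suc j"] coeff_support[OF assms(1)]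
    by (simp add: elem_tail_coeff_def)
qed

lemma addDelta_in_F':
  assumes A: "A \<in> F'" and j: "Suc j \<le> n" and a: "1 \<le> Poly_Mapping.lookup A (Suc j)"
  shows "addDelta A (Suc j) \<in> F'"
proof -
  have AF: "A \<in> F" and A_zero: "\<And>B. c A B = 0" using A by (auto simp: F'_iff)
  have "c (addDelta A (Suc j)) C = 0" for C
  proof (rule ccontr)
    assume nz: "c (addDelta A (Suc j)) C \<noteq> 0"
    have "(\<Sum>k\<le>m. elem_mon_coeff j (Suc j) A C k) = (\<Sum>k\<le>m. elem_tail_coeff j (Suc j) A C k)"
      using elem_coeff_sums_eq[OF j AF] coeff_support[OF nz] by simp
    also have "\<dots> = 0" by (intro sum.neutral) (simp add: elem_tail_coeff_def A_zero)
    finally have "(\<Sum>k\<le>m. elem_mon_coeff j (Suc j) A C k) = 0" .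
    then show False
      using sum_elem_mon_coeff_addDelta[OF AF a differ_by_weight[OF nz]] nz a by simp
  qed
  then show ?thesis using addDelta_in_F[OF AF _ a] j by (simp add: F'_iff)
qed

lemma addDelta_in_F'':
  assumes "c A B \<noteq> 0" "Suc j \<le> n" "1 \<le> Poly_Mapping.lookup B (Suc j)" "addDelta B (Suc j) \<in> R"
  shows "addDelta B (Suc j) \<in> F''"
proof -
  have "(\<Sum>k\<le>m. elem_mon_coeff j (Suc j) A (addDelta B (Suc j)) k) \<noteq> 0"
    using elem_coeff_sums_eq[OF assms(2) _ assms(4)] coeff_support[OF assms(1)]
      sum_elem_tail_coeff_addDelta[OF assms(1,3)] assms(1,3) by simp
  then obtain k where "elem_mon_coeff j (Suc j) A (addDelta B (Suc j)) k \<noteq> 0"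
    by (metis (no_types, lifting) sum.neutral)
  then have "c (move_expo j (Suc j) k A) (addDelta B (Suc j)) \<noteq> 0"
    by (auto simp: elem_mon_coeff_def split: if_splits)
  then show ?thesis by (rule in_F''_if_coeff)
qed

lemma is_filter_F': "is_filter m n F'"
proof (rule is_filterI)
  show "F' \<subseteq> Pmn m n" using F_in_Pmn by (auto simp: F'_def)
  fix A i assume "A \<in> F'" "i \<in> {1..n}" "1 \<le> Poly_Mapping.lookup A i"
  then show "addDelta A i \<in> F'" using addDelta_in_F'[of A "i - 1"] by simp
qed

lemma is_filter_F'': "is_filter m n F''"
proof (rule is_filterI)
  show "F'' \<subseteq> Pmn m n" using F_in_Pmn R_in_Pmn by (auto simp: F''_def)
  fix B i assume B: "B \<in> F''" and i: "i \<in> {1..n}" and b: "1 \<le> Poly_Mapping.lookup B i"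
  show "addDelta B i \<in> F''"
  proof (cases "B \<in> F")
    case True
    then show ?thesis using addDelta_in_F[OF True i b] by (simp add: F''_def)
  next
    case False
    then obtain A where A: "c A B \<noteq> 0" "B \<in> R" using B by (auto simp: F''_def)
    have "addDelta B i \<in> Pmn m n"
      using Pmn_move_expo[OF R_in_Pmn[OF A(2)], where j = "i - 1" and k = 1 and i = i] i b
      by (auto simp: addDelta_eq_move_expo)
    then consider "addDelta B i \<in> F" | "addDelta B i \<in> R" using Pmn_F_or_R by blast
    then show ?thesis
      using addDelta_in_F''[OF A(1), of "i - 1"] i b by cases (auto simp: F''_def)
  qed
qed

lemma ratio_of_coeffs:
  assumes A: "A \<in> F - F'" and AB: "differ_by weight A B" and i: "i \<in> {1..n}"
    and A': "addDelta A i \<in> F - F'"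
  shows "c (addDelta A i) (addDelta B i)
    = of_nat (Poly_Mapping.lookup B i) / of_nat (Poly_Mapping.lookup A i) * c A B"
proof -
  obtain j where j: "i = Suc j" "Suc j \<le> n" using i by (cases i) auto
  have "Poly_Mapping.lookup A i \<noteq> 0"
    using A A' addDelta_not_in_Pmn[OF F_in_Pmn, of A i] F_in_Pmn i by auto
  then have a: "1 \<le> Poly_Mapping.lookup A i" by simp
  obtain B' where "c A B' \<noteq> 0" using A by (auto simp: F'_iff)
  then have AB': "c A B \<noteq> 0"
    using differ_by_unique_right[OF differ_by_weight AB] by metis
  show ?thesis
  proof (cases "Poly_Mapping.lookup B i = 0")
    case True
    then have "addDelta B i \<notin> Pmn m n"
      using addDelta_not_in_Pmn[OF R_in_Pmn] coeff_support[OF AB'] i by auto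
    then show ?thesis using True coeff_support R_in_Pmn by fastforce
  next
    case False
    then have b: "1 \<le> Poly_Mapping.lookup B i" by simp
    have AB'': "differ_by weight (addDelta A i) (addDelta B i)"
      using differ_by_addDelta AB a b i by auto
    obtain C where "c (addDelta A i) C \<noteq> 0" using A' by (auto simp: F'_iff)
    then have "addDelta B i \<in> R"
      using differ_by_unique_right[OF differ_by_weight AB''] coeff_support by metis
    then have "of_nat (Poly_Mapping.lookup B i) * c A B
        = of_nat (Poly_Mapping.lookup A i) * c (addDelta A i) (addDelta B i)"
      using elem_coeff_sums_eq[OF j(2), of A "addDelta B i"] A j
        sum_elem_tail_coeff_addDelta[OF AB', of j] sum_elem_mon_coeff_addDelta[of A j] AB'' a b by simp
    then show ?thesis using a by (simp add: field_simps)
  qed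
qed

end

context borel_tangent
begin

lemma borel_eigenvector_iff:
  assumes nz: "c A0 B0 \<noteq> 0"
  shows "borel_eigenvector n m I c \<longleftrightarrow>
    (\<exists>K. (\<forall>i>n. K i = 0) \<and> (\<Sum>i\<le>n. K i) = 0 \<and>
       (\<forall>A B. c A B \<noteq> 0 \<longrightarrow> (\<forall>i. int (Poly_Mapping.lookup B i) - int (Poly_Mapping.lookup A i) = K i)) \<and>
       (\<forall>A\<in>F - F'. \<forall>B. differ_by K A B \<longrightarrow> (\<forall>i\<in>{1..n}. addDelta A i \<in> F - F' \<longrightarrow>
          c (addDelta A i) (addDelta B i)
            = of_nat (Poly_Mapping.lookup B i) / of_nat (Poly_Mapping.lookup A i) * c A B)))
    \<and> is_filter m n F' \<and> is_filter m n F''"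
    (is "_ \<longleftrightarrow> (\<exists>K. ?zero K \<and> ?sum K \<and> ?weight K \<and> ?ratio K) \<and> _")
proof
  assume "borel_eigenvector n m I c"
  then interpret eigen_tangent n m I c
    by (intro eigen_tangent.intro borel_tangent_axioms eigen_tangent_axioms.intro)
  have "A0 \<in> Pmn m n" "B0 \<in> Pmn m n"
    using coeff_support[OF nz] F_in_Pmn R_in_Pmn by auto
  then have "?zero weight" "?sum weight"
    using differ_by_Pmn[OF differ_by_weight[OF nz]] by auto
  moreover have "?weight weight" using differ_by_weight by (simp add: differ_by_iff_diff)
  moreover have "?ratio weight" by (blast intro: ratio_of_coeffs)
  ultimately show "(\<exists>K. ?zero K \<and> ?sum K \<and> ?weight K \<and> ?ratio K) \<and> is_filter m n F' \<and> is_filter m n F''"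
    using is_filter_F' is_filter_F'' by blast
next
  assume "(\<exists>K. ?zero K \<and> ?sum K \<and> ?weight K \<and> ?ratio K) \<and> is_filter m n F' \<and> is_filter m n F''"
  then obtain K where "?weight K" "?ratio K" "is_filter m n F'" "is_filter m n F''" by blast
  then interpret eigen_conditions n m I c K
    by (intro eigen_conditions.intro borel_tangent_axioms eigen_conditions_axioms.intro)
      (auto simp: differ_by_iff_diff)
  show "borel_eigenvector n m I c" by (rule borel_eigenvectorI[OF nz])
qed

end

theorem mainTheorem8:
  fixes n m :: nat
    and I :: "'k::{alg_closed_field, field_char_0} mpoly set"
    and c :: "expo \<Rightarrow> expo \<Rightarrow> 'k"
  assumes hilb_point: "homog_ideal n I" "saturated n I" "gotzmann_number n I m"
    and borel_fixed: "borel_fixed n I"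
    and tangent: "hilb_tangent n m I c"
    and nonzero: "\<exists>A B. c A B \<noteq> 0"
  shows "borel_eigenvector n m I c \<longleftrightarrow>
    (let F = Fset n m I; R = Rset n m I;
         F' = F - {A\<in>F. \<exists>B\<in>R. c A B \<noteq> 0};
         F'' = F \<union> {B\<in>R. \<exists>A\<in>F. c A B \<noteq> 0}
     in (\<exists>K::nat \<Rightarrow> int. (\<forall>i>n. K i = 0) \<and> (\<Sum>i\<le>n. K i) = 0 \<and>
           (\<forall>A B. c A B \<noteq> 0 \<longrightarrow> (\<forall>i. int (Poly_Mapping.lookup B i) - int (Poly_Mapping.lookup A i) = K i)) \<and>
           (\<forall>A\<in>F - F'. \<forall>B. (\<forall>i. int (Poly_Mapping.lookup B i) = int (Poly_Mapping.lookup A i) + K i) \<longrightarrow>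
              (\<forall>i\<in>{1..n}. addDelta A i \<in> F - F' \<longrightarrow>
                 c (addDelta A i) (addDelta B i)
                   = of_nat (Poly_Mapping.lookup B i) / of_nat (Poly_Mapping.lookup A i) * c A B)))
        \<and> is_filter m n F' \<and> is_filter m n F'')"
proof -
  interpret borel_tangent n m I c
    using hilb_point(1) borel_fixed tangent by unfold_locales
  obtain A0 B0 where "c A0 B0 \<noteq> 0" using nonzero by blast
  from borel_eigenvector_iff[OF this] show ?thesis
    unfolding Let_def F'_def F''_def differ_by_def .
qed

end
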